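(* Let $G$ be a finite graph with $n$ vertices and maximum degree $\Delta$, let $q\in\mathbb N$, $\beta\ge0$ and $\varepsilon>0$. If $\beta\le 2\varepsilon/\Delta$, then the transition matrix $P_{\rm SW}$ of the Swendsen--Wang dynamics for the $q$-state Potts model on $G$ at inverse temperature $\beta$ satisfies \[ \lambda(P_{\rm SW})\;\ge\;\frac{c_{\rm SW}(1-\varepsilon)}{n},\qquad c_{\rm SW}=q^{-1}\bigl(q\,e^{2\beta}\bigr)^{-2\Delta}. \]
   Context: Graphs are finite; parallel edges and loops are allowed; $\deg_G(v)$ is the number of edges having $v$ as an endvertex and $\Delta$ its maximum. For $A\subseteq E$, $c(A)$ is the number of connected components of $(V,A)$. Potts model: $\Omega_{\rm P}=\{1,\dots,q\}^V$, $E(\sigma)=\{e\in E:$ both endvertices of $e$ have the same color in $\sigma\}$, $\pi(\sigma)=e^{\beta|E(\sigma)|}/Z$. Swendsen--Wang dynamics: with $p=1-e^{-\beta}$, $P_{\rm SW}(\sigma,\tau)=(1-p)^{|E(\sigma)|}\sum_{A\subseteq E(\sigma)\cap E(\tau)}\bigl(\tfrac{p}{1-p}\bigr)^{|A|}q^{-c(A)}$; it is ergodic and reversible w.r.t. $\pi$. Spectral gap: $\lambda(P)=1-\max\{|\xi|:\xi\text{ an eigenvalue of }P,\ \xi\neq1\}$. *)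

theory Defs
  imports Complex_Main "HOL-Library.FuncSet"
begin

text \<open>A finite multigraph: vertex set V, edge set E, and an endpoint map
  ends :: 'e => 'v * 'v (parallel edges and loops allowed).\<close>

definition multigraph :: "'v set \<Rightarrow> 'e set \<Rightarrow> ('e \<Rightarrow> 'v \<times> 'v) \<Rightarrow> bool" where
  "multigraph V E ends \<longleftrightarrow> finite V \<and> finite E \<and>
     (\<forall>e\<in>E. fst (ends e) \<in> V \<and> snd (ends e) \<in> V)"

definition deg :: "'e set \<Rightarrow> ('e \<Rightarrow> 'v \<times> 'v) \<Rightarrow> 'v \<Rightarrow> nat" where
  "deg E ends v = card {e\<in>E. fst (ends e) = v \<or> snd (ends e) = v}"

definition max_deg :: "'v set \<Rightarrow> 'e set \<Rightarrow> ('e \<Rightarrow> 'v \<times> 'v) \<Rightarrow> nat" where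
  "max_deg V E ends = Max (insert 0 (deg E ends ` V))"

definition conn_rel :: "'v set \<Rightarrow> ('e \<Rightarrow> 'v \<times> 'v) \<Rightarrow> 'e set \<Rightarrow> ('v \<times> 'v) set" where
  "conn_rel V ends A =
     (Id_on V \<union> ends ` A \<union> (ends ` A)\<inverse>)\<^sup>* \<inter> (V \<times> V)"

definition num_comp :: "'v set \<Rightarrow> ('e \<Rightarrow> 'v \<times> 'v) \<Rightarrow> 'e set \<Rightarrow> nat" where
  "num_comp V ends A = card (V // conn_rel V ends A)"

definition potts_configs :: "'v set \<Rightarrow> nat \<Rightarrow> ('v \<Rightarrow> nat) set" where
  "potts_configs V q = (V \<rightarrow>\<^sub>E {1..q})"

definition mono_edges :: "'e set \<Rightarrow> ('e \<Rightarrow> 'v \<times> 'v) \<Rightarrow> ('v \<Rightarrow> nat) \<Rightarrow> 'e set" where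
  "mono_edges E ends \<sigma> = {e\<in>E. \<sigma> (fst (ends e)) = \<sigma> (snd (ends e))}"

definition P_SW :: "'v set \<Rightarrow> 'e set \<Rightarrow> ('e \<Rightarrow> 'v \<times> 'v) \<Rightarrow> nat \<Rightarrow> real
                     \<Rightarrow> ('v \<Rightarrow> nat) \<Rightarrow> ('v \<Rightarrow> nat) \<Rightarrow> real" where
  "P_SW V E ends q \<beta> \<sigma> \<tau> =
     (let p = 1 - exp (- \<beta>) in
      (1 - p) ^ card (mono_edges E ends \<sigma>) *
      (\<Sum>A\<in>Pow (mono_edges E ends \<sigma> \<inter> mono_edges E ends \<tau>).
          (p / (1 - p)) ^ card A * (1 / real q ^ num_comp V ends A)))"

definition is_eigenvalue :: "'a set \<Rightarrow> ('a \<Rightarrow> 'a \<Rightarrow> real) \<Rightarrow> complex \<Rightarrow> bool" where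
  "is_eigenvalue \<Omega> P \<xi> \<longleftrightarrow>
     (\<exists>f :: 'a \<Rightarrow> complex. (\<exists>x\<in>\<Omega>. f x \<noteq> 0) \<and>
        (\<forall>x\<in>\<Omega>. (\<Sum>y\<in>\<Omega>. complex_of_real (P x y) * f y) = \<xi> * f x))"

text \<open>Spectral gap 1 - max{|xi| : xi eigenvalue, xi ~= 1}; equals 1 if there is no
  eigenvalue other than 1.\<close>
definition spectral_gap :: "'a set \<Rightarrow> ('a \<Rightarrow> 'a \<Rightarrow> real) \<Rightarrow> real" where
  "spectral_gap \<Omega> P =
     1 - Max (insert 0 {cmod \<xi> | \<xi>. is_eigenvalue \<Omega> P \<xi> \<and> \<xi> \<noteq> 1})"

end

(*
  The spectral gap is bounded through Dirichlet forms. In the Edwards--Sokal coupling,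
  \<pi>(\<sigma>) P_SW(\<sigma>, \<tau>) is a sum over bond sets A of
  (p/(1-p))^|A| q^-c(A) [A \<subseteq> E(\<sigma>)] [A \<subseteq> E(\<tau>)], so the Dirichlet form of P_SW is a
  positive combination of variances of g over the colourings that are constant on A.
  Keeping only the bond sets that avoid the edges at a vertex v, these families of
  colourings are closed under recolouring v, which shows that the Dirichlet form dominates
  exp(-\<beta>\<Delta>)/(2q) times the local variation of g at v. The heat-bath Glauber dynamics has
  Dirichlet form at most exp(\<beta>\<Delta>)/(2q) times the average local variation, and for
  \<beta>\<Delta> < 2 it contracts site-wise Lipschitz constants by 1 - (1 - \<beta>\<Delta>/2)/n; by
  self-adjointness this contraction yields its Poincare constant (1 - \<beta>\<Delta>/2)/n. Since
  P_SW is reversible and positive semidefinite, its eigenvalues \<lambda> \<noteq> 1 are real, lie in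
  [0, 1], and satisfy 1 - \<lambda> \<ge> exp(-2\<beta>\<Delta>) (1 - \<beta>\<Delta>/2)/n \<ge> c_SW (1 - \<epsilon>)/n.
*)

theory Submission
  imports Defs "Jordan_Normal_Form.Char_Poly"
begin

lemma sum_Pow_power:
  fixes y :: "'a::comm_semiring_1"
  assumes "finite S"
  shows "(\<Sum>A\<in>Pow S. y ^ card A) = (1 + y) ^ card S"
  using prod_add[OF assms, of "\<lambda>_. y" "\<lambda>_. 1"] by (simp add: add.commute)

lemma weighted_Cauchy_Schwarz:
  fixes w f g :: "'a \<Rightarrow> real"
  assumes "\<And>x. x \<in> S \<Longrightarrow> w x \<ge> 0"
  shows "(\<Sum>x\<in>S. w x * f x * g x)\<^sup>2 \<le> (\<Sum>x\<in>S. w x * (f x)\<^sup>2) * (\<Sum>x\<in>S. w x * (g x)\<^sup>2)"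
proof -
  define A where "A = (\<Sum>x\<in>S. w x * (f x)\<^sup>2)"
  define B where "B = (\<Sum>x\<in>S. w x * f x * g x)"
  define C where "C = (\<Sum>x\<in>S. w x * (g x)\<^sup>2)"
  have "0 \<le> (\<Sum>x\<in>S. w x * (C * f x - B * g x)\<^sup>2)"
    using assms by (intro sum_nonneg) simp
  also have "\<dots> = (\<Sum>x\<in>S. C\<^sup>2 * (w x * (f x)\<^sup>2) - 2 * C * B * (w x * f x * g x) + B\<^sup>2 * (w x * (g x)\<^sup>2))"
    by (rule sum.cong) (simp_all add: power2_eq_square algebra_simps)
  also have "\<dots> = C\<^sup>2 * A - 2 * C * B * B + B\<^sup>2 * C"
    unfolding A_def B_def C_def by (simp add: sum.distrib sum_subtractf sum_distrib_left)
  finally have CS: "0 \<le> C * (A * C - B\<^sup>2)" by (simp add: power2_eq_square algebra_simps)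
  have "C \<ge> 0" "A \<ge> 0" unfolding A_def C_def using assms by (auto intro: sum_nonneg)
  moreover have "B = 0" if "C = 0"
  proof (cases "finite S")
    case True
    with that assms have "\<forall>x\<in>S. w x * (g x)\<^sup>2 = 0"
      unfolding C_def by (subst sum_nonneg_eq_0_iff[symmetric]) auto
    then show ?thesis unfolding B_def by (auto intro!: sum.neutral simp: power2_eq_square)
  qed (simp add: B_def)
  ultimately show ?thesis
    using CS by (cases "C = 0") (auto simp: zero_le_mult_iff A_def B_def C_def)
qed

lemma square_sum_le_card_mult_sum_squares:
  fixes f :: "'a \<Rightarrow> real"
  shows "(\<Sum>x\<in>S. f x)\<^sup>2 \<le> real (card S) * (\<Sum>x\<in>S. (f x)\<^sup>2)"
  using weighted_Cauchy_Schwarz[of S "\<lambda>_. 1" "\<lambda>_. 1" f] by simp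

subsection \<open>Weighted means and exponential tilting\<close>

definition weighted_mean :: "'c set \<Rightarrow> ('c \<Rightarrow> real) \<Rightarrow> ('c \<Rightarrow> real) \<Rightarrow> real" where
  "weighted_mean C R H = (\<Sum>c\<in>C. R c * H c) / (\<Sum>c\<in>C. R c)"

lemma weighted_mean_scale:
  "K \<noteq> 0 \<Longrightarrow> weighted_mean C (\<lambda>c. K * R c) H = weighted_mean C R H"
  unfolding weighted_mean_def by (simp add: sum_distrib_left[symmetric] mult.assoc)

lemma weighted_mean_diff_le:
  assumes "\<forall>c\<in>C. R c > 0" and "\<forall>c\<in>C. \<bar>H c - H' c\<bar> \<le> D" and "finite C" "C \<noteq> {}"
  shows "\<bar>weighted_mean C R H - weighted_mean C R H'\<bar> \<le> D"
proof -
  have SR: "(\<Sum>c\<in>C. R c) > 0" using assms by (intro sum_pos) auto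
  have "\<bar>(\<Sum>c\<in>C. R c * H c) - (\<Sum>c\<in>C. R c * H' c)\<bar> \<le> (\<Sum>c\<in>C. \<bar>R c * (H c - H' c)\<bar>)"
    by (simp add: sum_subtractf[symmetric] right_diff_distrib sum_abs)
  also have "\<dots> \<le> (\<Sum>c\<in>C. R c * D)"
    using assms(1,2) by (intro sum_mono) (simp add: abs_mult abs_of_pos mult_left_mono)
  also have "\<dots> = D * (\<Sum>c\<in>C. R c)" by (simp add: sum_distrib_left mult.commute)
  finally show ?thesis
    using SR unfolding weighted_mean_def
    by (simp add: diff_divide_distrib[symmetric] abs_divide pos_divide_le_eq)
qed

lemma exp_minus_one_le_half_mult_exp_plus_one:
  fixes s :: real
  assumes "s \<ge> 0"
  shows "exp s - 1 \<le> s / 2 * (exp s + 1)"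
proof -
  define f where "f x = x / 2 * (exp x + 1) - exp x + 1" for x :: real
  have "f 0 \<le> f s"
  proof (rule DERIV_nonneg_imp_nondecreasing[OF assms])
    fix x :: real
    assume "0 \<le> x"
    have "(f has_real_derivative (1 + x * exp x - exp x) / 2) (at x)"
      unfolding f_def by (auto intro!: derivative_eq_intros simp: field_simps)
    moreover have "exp x \<le> 1 + x * exp x"
      using exp_ge_add_one_self[of "-x"] mult_right_mono[of "1 - x" "exp (-x)" "exp x"]
      by (simp add: exp_minus field_simps)
    ultimately show "\<exists>y. (f has_real_derivative y) (at x) \<and> 0 \<le> y" by force
  qed
  then show ?thesis unfolding f_def by simp
qed

text \<open>With \<open>z = exp (t/2)\<close>, this is \<open>(z - 1)/(z + 1) \<le> t/4\<close> combined with
  \<open>(z + 1)\<^sup>2 a (s - a) \<le> s (s + (z\<^sup>2 - 1) a)\<close>, i.e. \<open>(s - (z + 1) a)\<^sup>2 \<ge> 0\<close>.\<close>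

lemma tilt_factor_bound:
  fixes a s t :: real
  assumes "0 \<le> a" "a \<le> s" "0 \<le> t"
  shows "(exp t - 1) * (a * (s - a)) \<le> t / 4 * (s * (s + (exp t - 1) * a))"
proof -
  define z where "z = exp (t / 2)"
  have z1: "z \<ge> 1" unfolding z_def using assms by simp
  have ez: "exp t = z\<^sup>2" unfolding z_def by (simp add: power2_eq_square exp_add[symmetric])
  have tanh: "z - 1 \<le> t / 4 * (z + 1)"
    unfolding z_def using exp_minus_one_le_half_mult_exp_plus_one[of "t / 2"] assms by simp
  have sq: "(z + 1)\<^sup>2 * (a * (s - a)) \<le> s * (s + (z\<^sup>2 - 1) * a)"
    using zero_le_power2[of "s - (z + 1) * a"] by (simp add: power2_eq_square algebra_simps)
  have "(z\<^sup>2 - 1) * (a * (s - a)) * (z + 1) = (z - 1) * ((z + 1)\<^sup>2 * (a * (s - a)))"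
    by (simp add: power2_eq_square algebra_simps)
  also have "\<dots> \<le> (z - 1) * (s * (s + (z\<^sup>2 - 1) * a))"
    using sq z1 by (intro mult_left_mono) auto
  also have "\<dots> \<le> t / 4 * (z + 1) * (s * (s + (z\<^sup>2 - 1) * a))"
    using tanh assms z1 by (intro mult_right_mono) auto
  finally show ?thesis
    unfolding ez using z1 by (simp add: mult_ac)
qed

lemma weighted_deviation_le:
  fixes R H :: "'c \<Rightarrow> real"
  assumes "finite C" "a \<in> C" "\<forall>c\<in>C. R c \<ge> 0" "\<forall>c\<in>C. \<bar>H a - H c\<bar> \<le> D"
  shows "\<bar>H a * (\<Sum>c\<in>C. R c) - (\<Sum>c\<in>C. R c * H c)\<bar> \<le> ((\<Sum>c\<in>C. R c) - R a) * D"
proof -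
  have "H a * (\<Sum>c\<in>C. R c) - (\<Sum>c\<in>C. R c * H c) = (\<Sum>c\<in>C - {a}. R c * (H a - H c))"
    using assms(1,2)
    by (simp add: sum_distrib_left sum_subtractf[symmetric] sum.remove[of C a] algebra_simps)
  also have "\<bar>\<dots>\<bar> \<le> (\<Sum>c\<in>C - {a}. R c * D)"
    using assms(3,4) by (intro order.trans[OF sum_abs] sum_mono) (simp add: abs_mult mult_left_mono)
  also have "\<dots> = ((\<Sum>c\<in>C. R c) - R a) * D"
    using assms(1,2) by (simp add: sum_distrib_right[symmetric] sum_diff1)
  finally show ?thesis .
qed

lemma weighted_mean_tilt:
  fixes R H :: "'c \<Rightarrow> real"
  assumes fin: "finite C" and aC: "a \<in> C" and Rpos: "\<forall>c\<in>C. R c > 0" and t: "t \<ge> 0"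
    and osc: "\<forall>c1\<in>C. \<forall>c2\<in>C. \<bar>H c1 - H c2\<bar> \<le> D"
  shows "\<bar>weighted_mean C (\<lambda>c. R c * exp (t * of_bool (c = a))) H - weighted_mean C R H\<bar> \<le> t / 4 * D"
proof -
  define y where "y = exp t - 1"
  define SR where "SR = sum R C"
  define SH where "SH = (\<Sum>c\<in>C. R c * H c)"
  have y: "y \<ge> 0" unfolding y_def using t by simp
  have Ra: "R a > 0" using Rpos aC by auto
  have SRa: "R a \<le> SR" unfolding SR_def
    using member_le_sum[of a C R] aC Rpos fin by (auto simp: less_imp_le)
  have SR: "SR > 0" using Ra SRa by simp
  have D: "D \<ge> 0" using osc aC by fastforce
  have tilted: "(\<Sum>c\<in>C. R c * exp (t * of_bool (c = a)) * F c) = (\<Sum>c\<in>C. R c * F c) + y * R a * F a"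
    for F :: "'c \<Rightarrow> real"
  proof -
    have "(\<Sum>c\<in>C. R c * exp (t * of_bool (c = a)) * F c)
        = (\<Sum>c\<in>C. R c * F c + (if c = a then y * R a * F a else 0))"
      by (rule sum.cong) (auto simp: y_def algebra_simps)
    then show ?thesis using fin aC by (simp add: sum.distrib)
  qed
  have den: "SR + y * R a > 0" using SR Ra y by (simp add: add_pos_nonneg)
  have dev: "\<bar>H a * SR - SH\<bar> \<le> (SR - R a) * D"
    unfolding SR_def SH_def
    by (rule weighted_deviation_le[OF fin aC]) (use Rpos osc aC in \<open>auto intro: less_imp_le\<close>)
  have "weighted_mean C (\<lambda>c. R c * exp (t * of_bool (c = a))) H - weighted_mean C R H
      = y * R a * (H a * SR - SH) / ((SR + y * R a) * SR)"
    using tilted[of H] tilted[of "\<lambda>_. 1"] den SR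
    unfolding weighted_mean_def SH_def[symmetric] by (simp add: field_simps SR_def)
  also have "\<bar>\<dots>\<bar> \<le> y * R a * ((SR - R a) * D) / ((SR + y * R a) * SR)"
    using dev y Ra den SR
    by (auto simp: abs_mult abs_divide less_imp_le intro!: divide_right_mono mult_left_mono)
  also have "\<dots> \<le> t / 4 * D"
    using mult_right_mono[OF tilt_factor_bound[OF less_imp_le[OF Ra] SRa t] D] den SR
    unfolding y_def[symmetric] by (simp add: pos_divide_le_eq mult_ac)
  finally show ?thesis .
qed

lemma weighted_mean_two_tilts:
  fixes R H :: "'c \<Rightarrow> real"
  assumes "finite C" "a \<in> C" "b \<in> C" "\<forall>c\<in>C. R c > 0" "t \<ge> 0"
    and "\<forall>c1\<in>C. \<forall>c2\<in>C. \<bar>H c1 - H c2\<bar> \<le> D" and "K \<noteq> 0"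
  shows "\<bar>weighted_mean C (\<lambda>c. R c * exp (t * of_bool (c = a))) H
          - weighted_mean C (\<lambda>c. K * (R c * exp (t * of_bool (c = b)))) H\<bar> \<le> t / 2 * D"
  using weighted_mean_tilt[OF assms(1,2,4,5,6)] weighted_mean_tilt[OF assms(1,3,4,5,6)]
  unfolding weighted_mean_scale[OF assms(7)] by linarith

subsection \<open>Log-convex sequences\<close>

lemma log_convex_power_bound:
  fixes b :: "nat \<Rightarrow> real"
  assumes nonneg: "\<And>k. b k \<ge> 0" and lc: "\<And>k. (b (Suc k))\<^sup>2 \<le> b k * b (Suc (Suc k))"
    and b0: "b 0 > 0"
  shows "b 1 ^ k * b 0 \<le> b 0 ^ k * b k"
proof -
  have ratio: "b 1 * b k \<le> b 0 * b (Suc k)" for k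
  proof (induction k)
    case (Suc k)
    show ?case
    proof (cases "b (Suc k) = 0")
      case False
      then have pos: "b (Suc k) > 0" using nonneg[of "Suc k"] by simp
      have "(b 1 * b (Suc k)) * b (Suc k) \<le> (b 1 * b k) * b (Suc (Suc k))"
        using lc[of k] nonneg[of 1] by (simp add: power2_eq_square mult.assoc mult_left_mono)
      also have "\<dots> \<le> (b 0 * b (Suc k)) * b (Suc (Suc k))"
        using Suc.IH nonneg by (intro mult_right_mono) auto
      finally show ?thesis using pos by (simp add: mult_ac)
    qed (use nonneg b0 in simp)
  qed (simp add: mult.commute)
  show ?thesis
  proof (induction k)
    case (Suc k)
    have "b 1 ^ Suc k * b 0 \<le> b 1 * (b 0 ^ k * b k)"
      using mult_left_mono[OF Suc.IH nonneg[of 1]] by simp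
    also have "\<dots> \<le> b 0 ^ k * (b 0 * b (Suc k))"
      using ratio[of k] b0 by (simp add: mult.left_commute mult_left_mono)
    finally show ?case by (simp add: mult_ac)
  qed simp
qed

text \<open>A log-convex sequence with \<open>b k = O(\<rho>\<^sup>k)\<close> has \<open>b 1 \<le> \<rho> b 0\<close>: otherwise
  \<open>b k \<ge> (b 1 / b 0)\<^sup>k b 0\<close> would grow faster than \<open>\<rho>\<^sup>k\<close>.\<close>

lemma log_convex_ratio_le:
  fixes b :: "nat \<Rightarrow> real"
  assumes nonneg: "\<And>k. b k \<ge> 0" and lc: "\<And>k. (b (Suc k))\<^sup>2 \<le> b k * b (Suc (Suc k))"
    and bound: "\<And>k. b k \<le> M * \<rho> ^ k" and \<rho>: "\<rho> \<ge> 0"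
  shows "b 1 \<le> \<rho> * b 0"
proof (cases "b 0 = 0")
  case True
  then show ?thesis using lc[of 0] by simp
next
  case False
  then have b0: "b 0 > 0" using nonneg[of 0] by simp
  define r where "r = b 1 / b 0"
  have rk: "r ^ k * b 0 \<le> M * \<rho> ^ k" for k
  proof -
    have "b 1 ^ k * b 0 \<le> b 0 ^ k * (M * \<rho> ^ k)"
      using log_convex_power_bound[OF nonneg lc b0, of k] bound[of k] b0
      by (meson order.trans mult_left_mono zero_le_power less_imp_le)
    then show ?thesis unfolding r_def using b0 by (simp add: power_divide field_simps)
  qed
  show ?thesis
  proof (rule ccontr)
    assume "\<not> b 1 \<le> \<rho> * b 0"
    then have r: "r > \<rho>" using b0 unfolding r_def by (simp add: field_simps)
    then have "\<rho> > 0" using rk[of 1] b0 \<rho> by (cases "\<rho> = 0") (auto simp: mult_le_0_iff)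
    then have "1 < r / \<rho>" using r by (simp add: field_simps)
    then obtain k where k: "M / b 0 < (r / \<rho>) ^ k" using real_arch_pow by blast
    have "(r / \<rho>) ^ k \<le> M / b 0"
      using rk[of k] b0 \<open>\<rho> > 0\<close> by (simp add: power_divide field_simps)
    then show False using k by simp
  qed
qed

subsection \<open>Eigenvalues and spectral gap\<close>

lemma finite_eigenvalues:
  fixes P :: "'a \<Rightarrow> 'a \<Rightarrow> real"
  assumes fin: "finite \<Omega>"
  shows "finite {\<xi>. is_eigenvalue \<Omega> P \<xi>}"
proof -
  define N where "N = card \<Omega>"
  obtain idx where bij: "bij_betw idx {0..<N} \<Omega>"
    using ex_bij_betw_nat_finite[OF fin] unfolding N_def by blast
  define M where "M = mat N N (\<lambda>(i, j). complex_of_real (P (idx i) (idx j)))"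
  have M: "M \<in> carrier_mat N N" unfolding M_def by simp
  have "eigenvalue M \<xi>" if ev: "is_eigenvalue \<Omega> P \<xi>" for \<xi>
  proof -
    obtain f where f1: "\<exists>x\<in>\<Omega>. f x \<noteq> 0"
      and f2: "\<forall>x\<in>\<Omega>. (\<Sum>y\<in>\<Omega>. complex_of_real (P x y) * f y) = \<xi> * f x"
      using ev unfolding is_eigenvalue_def by blast
    define v where "v = vec N (\<lambda>i. f (idx i))"
    have "v \<noteq> 0\<^sub>v N"
    proof
      assume v0: "v = 0\<^sub>v N"
      obtain i where i: "i < N" "f (idx i) \<noteq> 0"
        using f1 bij unfolding bij_betw_def by auto
      have "v $ i = 0" using v0 i by simp
      then show False using i unfolding v_def by simp
    qed
    moreover have "M *\<^sub>v v = \<xi> \<cdot>\<^sub>v v"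
    proof (rule eq_vecI)
      fix i
      assume "i < dim_vec (\<xi> \<cdot>\<^sub>v v)"
      then have i: "i < N" unfolding v_def by simp
      have "(M *\<^sub>v v) $ i = (\<Sum>j\<in>{0..<N}. complex_of_real (P (idx i) (idx j)) * f (idx j))"
        unfolding M_def v_def using i by (simp add: mult_mat_vec_def scalar_prod_def)
      also have "\<dots> = (\<Sum>y\<in>\<Omega>. complex_of_real (P (idx i) y) * f y)"
        by (rule sum.reindex_bij_betw[OF bij])
      also have "\<dots> = (\<xi> \<cdot>\<^sub>v v) $ i"
        using f2 bij i unfolding bij_betw_def v_def by auto
      finally show "(M *\<^sub>v v) $ i = (\<xi> \<cdot>\<^sub>v v) $ i" .
    qed (simp add: M_def v_def)
    moreover have "v \<in> carrier_vec N" unfolding v_def by simp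
    ultimately show ?thesis
      using M unfolding eigenvalue_def eigenvector_def by blast
  qed
  then have "{\<xi>. is_eigenvalue \<Omega> P \<xi>} \<subseteq> {x. poly (char_poly M) x = 0}"
    using eigenvalue_root_char_poly[OF M] by blast
  moreover have "char_poly M \<noteq> 0" using degree_monic_char_poly[OF M] by auto
  ultimately show ?thesis using poly_roots_finite finite_subset by blast
qed

lemma spectral_gap_geI:
  fixes P :: "'a \<Rightarrow> 'a \<Rightarrow> real"
  assumes "finite \<Omega>"
    and "\<And>\<xi>. is_eigenvalue \<Omega> P \<xi> \<Longrightarrow> \<xi> \<noteq> 1 \<Longrightarrow> cmod \<xi> \<le> 1 - T"
    and "T \<le> 1"
  shows "spectral_gap \<Omega> P \<ge> T"
proof -
  have "{cmod \<xi> | \<xi>. is_eigenvalue \<Omega> P \<xi> \<and> \<xi> \<noteq> 1} \<subseteq> cmod ` {\<xi>. is_eigenvalue \<Omega> P \<xi>}"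
    by blast
  then have "finite {cmod \<xi> | \<xi>. is_eigenvalue \<Omega> P \<xi> \<and> \<xi> \<noteq> 1}"
    using finite_eigenvalues[OF assms(1), of P] by (rule finite_subset[OF _ finite_imageI])
  then have "Max (insert 0 {cmod \<xi> | \<xi>. is_eigenvalue \<Omega> P \<xi> \<and> \<xi> \<noteq> 1}) \<le> 1 - T"
    using assms(2,3) by (subst Max_le_iff) auto
  then show ?thesis unfolding spectral_gap_def by simp
qed

subsection \<open>Recolouring a single vertex\<close>

lemma sum_recolour_swap:
  fixes G :: "('v \<Rightarrow> 'c) \<Rightarrow> ('v \<Rightarrow> 'c) \<Rightarrow> real"
  assumes finS: "finite S" and finC: "finite C"
    and closed: "\<forall>\<sigma>\<in>S. \<forall>c\<in>C. \<sigma>(v := c) \<in> S" and colour: "\<forall>\<sigma>\<in>S. \<sigma> v \<in> C"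
  shows "(\<Sum>\<sigma>\<in>S. \<Sum>c\<in>C. G \<sigma> (\<sigma>(v := c))) = (\<Sum>\<sigma>\<in>S. \<Sum>c\<in>C. G (\<sigma>(v := c)) \<sigma>)"
proof -
  define N where "N \<sigma> = (\<lambda>c. \<sigma>(v := c)) ` C" for \<sigma> :: "'v \<Rightarrow> 'c"
  have inj: "inj_on (\<lambda>c. \<sigma>(v := c)) C" for \<sigma> :: "'v \<Rightarrow> 'c"
    by (rule inj_onI) (drule fun_cong[where x = v], simp)
  have as_Sigma: "(\<Sum>\<sigma>\<in>S. \<Sum>c\<in>C. H \<sigma> (\<sigma>(v := c))) = (\<Sum>(\<sigma>, \<tau>)\<in>Sigma S N. H \<sigma> \<tau>)"
    for H :: "('v \<Rightarrow> 'c) \<Rightarrow> ('v \<Rightarrow> 'c) \<Rightarrow> real"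
  proof -
    have "(\<Sum>\<sigma>\<in>S. \<Sum>c\<in>C. H \<sigma> (\<sigma>(v := c))) = (\<Sum>\<sigma>\<in>S. \<Sum>\<tau>\<in>N \<sigma>. H \<sigma> \<tau>)"
      unfolding N_def by (simp only: sum.reindex[OF inj] comp_def)
    also have "\<dots> = (\<Sum>(\<sigma>, \<tau>)\<in>Sigma S N. H \<sigma> \<tau>)"
      by (rule sum.Sigma[OF finS]) (simp add: N_def finC)
    finally show ?thesis .
  qed
  have swap_mem: "prod.swap p \<in> Sigma S N" if pS: "p \<in> Sigma S N" for p
  proof -
    obtain \<sigma> c where p: "p = (\<sigma>, \<sigma>(v := c))" "\<sigma> \<in> S" "c \<in> C"
      using pS unfolding N_def by auto
    have "\<sigma> \<in> N (\<sigma>(v := c))"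
      unfolding N_def using colour p(2) by (intro rev_image_eqI[of "\<sigma> v"]) auto
    then show ?thesis using p closed by auto
  qed
  have "prod.swap ` Sigma S N = Sigma S N"
  proof
    show "Sigma S N \<subseteq> prod.swap ` Sigma S N"
      using swap_mem by (metis image_eqI subsetI swap_swap)
  qed (use swap_mem in blast)
  then have "(\<Sum>(\<sigma>, \<tau>)\<in>Sigma S N. G \<sigma> \<tau>) = (\<Sum>(\<sigma>, \<tau>)\<in>Sigma S N. G \<tau> \<sigma>)"
    using sum.reindex[of prod.swap "Sigma S N" "\<lambda>(\<sigma>, \<tau>). G \<sigma> \<tau>"]
    by (simp add: comp_def case_prod_beta)
  then show ?thesis using as_Sigma[of G] as_Sigma[of "\<lambda>\<sigma> \<tau>. G \<tau> \<sigma>"] by simp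
qed

lemma sum_recolour_const:
  fixes h :: "('v \<Rightarrow> 'c) \<Rightarrow> real"
  assumes "finite S" "finite C" "\<forall>\<sigma>\<in>S. \<forall>c\<in>C. \<sigma>(v := c) \<in> S" "\<forall>\<sigma>\<in>S. \<sigma> v \<in> C"
  shows "(\<Sum>\<sigma>\<in>S. \<Sum>c\<in>C. h (\<sigma>(v := c))) = real (card C) * (\<Sum>\<sigma>\<in>S. h \<sigma>)"
  using sum_recolour_swap[OF assms, of "\<lambda>\<sigma> \<tau>. h \<tau>"] by (simp add: sum_distrib_left)

text \<open>Cauchy--Schwarz applied to the sums of \<open>g\<close> over the recolourings of \<open>v\<close>.\<close>

lemma variance_ge_recolour_variation:
  fixes g :: "('v \<Rightarrow> 'c) \<Rightarrow> real"
  assumes finS: "finite S" and finC: "finite C" and C: "C \<noteq> {}"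
    and closed: "\<forall>\<sigma>\<in>S. \<forall>c\<in>C. \<sigma>(v := c) \<in> S" and colour: "\<forall>\<sigma>\<in>S. \<sigma> v \<in> C"
    and N: "real (card S) \<le> N"
  shows "(\<Sum>\<sigma>\<in>S. (g \<sigma>)\<^sup>2) - (\<Sum>\<sigma>\<in>S. g \<sigma>)\<^sup>2 / N
         \<ge> 1 / (2 * real (card C)) * (\<Sum>\<sigma>\<in>S. \<Sum>c\<in>C. (g \<sigma> - g (\<sigma>(v := c)))\<^sup>2)"
proof -
  define k where "k = real (card C)"
  define A where "A \<sigma> = (\<Sum>c\<in>C. g (\<sigma>(v := c)))" for \<sigma>
  define X where "X = (\<Sum>\<sigma>\<in>S. g \<sigma> * A \<sigma>)"
  have k: "k > 0" unfolding k_def using finC C by (simp add: card_gt_0_iff)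
  note recolour = sum_recolour_const[OF finS finC closed colour] sum_recolour_swap[OF finS finC closed colour]
  have variation: "(\<Sum>\<sigma>\<in>S. \<Sum>c\<in>C. (g \<sigma> - g (\<sigma>(v := c)))\<^sup>2) = 2 * k * (\<Sum>\<sigma>\<in>S. (g \<sigma>)\<^sup>2) - 2 * X"
    using recolour(1)[of "\<lambda>\<sigma>. (g \<sigma>)\<^sup>2"] unfolding k_def X_def A_def
    by (simp add: power2_diff sum.distrib sum_subtractf sum_distrib_left mult.assoc)
  have "(\<Sum>\<sigma>\<in>S. (A \<sigma>)\<^sup>2) = (\<Sum>\<sigma>\<in>S. \<Sum>c\<in>C. A \<sigma> * g (\<sigma>(v := c)))"
    by (simp add: power2_eq_square A_def sum_distrib_left)
  also have "\<dots> = (\<Sum>\<sigma>\<in>S. \<Sum>c\<in>C. A (\<sigma>(v := c)) * g \<sigma>)"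
    by (rule recolour(2))
  also have "\<dots> = k * X" unfolding k_def X_def A_def by (simp add: sum_distrib_left mult.commute)
  finally have sq: "(\<Sum>\<sigma>\<in>S. (A \<sigma>)\<^sup>2) = k * X" .
  have "k\<^sup>2 * (\<Sum>\<sigma>\<in>S. g \<sigma>)\<^sup>2 = (\<Sum>\<sigma>\<in>S. A \<sigma>)\<^sup>2"
    using recolour(1)[of g] unfolding k_def A_def by (simp add: power_mult_distrib)
  also have "\<dots> \<le> real (card S) * (\<Sum>\<sigma>\<in>S. (A \<sigma>)\<^sup>2)" by (rule square_sum_le_card_mult_sum_squares)
  also have "\<dots> \<le> N * (k * X)"
    unfolding sq using N sum_nonneg[of S "\<lambda>\<sigma>. (A \<sigma>)\<^sup>2"] sq by (intro mult_right_mono) auto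
  finally have CS: "k * (\<Sum>\<sigma>\<in>S. g \<sigma>)\<^sup>2 \<le> N * X"
    using k by (simp add: power2_eq_square mult_ac)
  show ?thesis
  proof (cases "N > 0")
    case False
    then have "card S = 0" using N by linarith
    then show ?thesis using finS by simp
  next
    case True
    then have "(\<Sum>\<sigma>\<in>S. g \<sigma>)\<^sup>2 / N \<le> X / k" using CS k by (simp add: field_simps)
    moreover have "1 / (2 * k) * (2 * k * (\<Sum>\<sigma>\<in>S. (g \<sigma>)\<^sup>2) - 2 * X) = (\<Sum>\<sigma>\<in>S. (g \<sigma>)\<^sup>2) - X / k"
      using k by (simp add: field_simps)
    ultimately show ?thesis unfolding variation k_def[symmetric] by linarith
  qed
qed

subsection \<open>Colourings constant on the edges of a subgraph\<close>

lemma equiv_conn_rel: "equiv V (conn_rel V ends A)"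
proof -
  define G where "G = Id_on V \<union> ends ` A \<union> (ends ` A)\<inverse>"
  have "sym (G\<^sup>*)" by (rule sym_rtrancl) (auto simp: G_def sym_def)
  then have "sym (G\<^sup>* \<inter> V \<times> V)" unfolding sym_def by blast
  moreover have "trans (G\<^sup>* \<inter> V \<times> V)" using trans_rtrancl[of G] unfolding trans_def by blast
  moreover have "refl_on V (G\<^sup>* \<inter> V \<times> V)" unfolding refl_on_def by blast
  ultimately show ?thesis unfolding equiv_def conn_rel_def G_def by blast
qed

lemma constant_on_edges_iff_respects_conn_rel:
  assumes "\<forall>e\<in>A. fst (ends e) \<in> V \<and> snd (ends e) \<in> V"
  shows "(\<forall>e\<in>A. \<tau> (fst (ends e)) = \<tau> (snd (ends e)))
    \<longleftrightarrow> (\<forall>(x, y)\<in>conn_rel V ends A. \<tau> x = \<tau> y)"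
proof
  assume H: "\<forall>e\<in>A. \<tau> (fst (ends e)) = \<tau> (snd (ends e))"
  have "\<tau> x = \<tau> y" if "(x, y) \<in> (Id_on V \<union> ends ` A \<union> (ends ` A)\<inverse>)\<^sup>*" for x y
    using that
  proof (induction rule: rtrancl_induct)
    case (step y z)
    then show ?case using H by (auto simp: Id_on_def) (metis fst_conv snd_conv)+
  qed simp
  then show "\<forall>(x, y)\<in>conn_rel V ends A. \<tau> x = \<tau> y" unfolding conn_rel_def by auto
next
  assume "\<forall>(x, y)\<in>conn_rel V ends A. \<tau> x = \<tau> y"
  moreover have "(fst (ends e), snd (ends e)) \<in> conn_rel V ends A" if "e \<in> A" for e
    using that assms unfolding conn_rel_def
    by (auto simp: mem_Times_iff intro!: r_into_rtrancl image_eqI[where x = e])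
  ultimately show "\<forall>e\<in>A. \<tau> (fst (ends e)) = \<tau> (snd (ends e))" by fastforce
qed

lemma card_respecting_PiE:
  assumes R: "equiv V R" and fin: "finite V"
  shows "card {\<tau>\<in>V \<rightarrow>\<^sub>E C. \<forall>(x, y)\<in>R. \<tau> x = \<tau> y} = card C ^ card (V // R)"
proof -
  define lift where "lift h = (\<lambda>x\<in>V. h (R `` {x}))" for h :: "'a set \<Rightarrow> 'b"
  have class_eq: "R `` {x} = R `` {y}" if "(x, y) \<in> R" for x y
    using R that by (simp add: equiv_class_eq)
  have "bij_betw lift (V // R \<rightarrow>\<^sub>E C) {\<tau>\<in>V \<rightarrow>\<^sub>E C. \<forall>(x, y)\<in>R. \<tau> x = \<tau> y}"
  proof (rule bij_betw_imageI)
    show "inj_on lift (V // R \<rightarrow>\<^sub>E C)"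
    proof (rule inj_onI, rule extensionalityI[where A = "V // R"])
      fix h h' X
      assume eq: "lift h = lift h'" and "X \<in> V // R"
      then obtain x where "x \<in> V" "X = R `` {x}" by (auto elim: quotientE)
      then show "h X = h' X" using fun_cong[OF eq, of x] unfolding lift_def by simp
    qed (auto simp: PiE_def)
    show "lift ` (V // R \<rightarrow>\<^sub>E C) = {\<tau>\<in>V \<rightarrow>\<^sub>E C. \<forall>(x, y)\<in>R. \<tau> x = \<tau> y}"
    proof (intro equalityI subsetI)
      fix \<tau>
      assume "\<tau> \<in> lift ` (V // R \<rightarrow>\<^sub>E C)"
      then show "\<tau> \<in> {\<tau>\<in>V \<rightarrow>\<^sub>E C. \<forall>(x, y)\<in>R. \<tau> x = \<tau> y}"
        using class_eq equiv_type[OF R] unfolding lift_def by (auto intro: quotientI)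
    next
      fix \<tau>
      assume \<tau>: "\<tau> \<in> {\<tau>\<in>V \<rightarrow>\<^sub>E C. \<forall>(x, y)\<in>R. \<tau> x = \<tau> y}"
      define h where "h = (\<lambda>X\<in>V // R. the_elem (\<tau> ` X))"
      have classes: "\<tau> ` (R `` {x}) = {\<tau> x}" if "x \<in> V" for x
        using \<tau> that R equiv_class_self[OF R that] by (auto simp: sym_def equiv_def)
      then have "h \<in> V // R \<rightarrow>\<^sub>E C"
        using \<tau> unfolding h_def by (auto elim!: quotientE)
      moreover have "lift h x = \<tau> x" for x
        using classes \<tau>
        unfolding h_def lift_def by (cases "x \<in> V") (auto intro: quotientI)
      ultimately show "\<tau> \<in> lift ` (V // R \<rightarrow>\<^sub>E C)" by (metis ext image_eqI)
    qed
  qed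
  moreover have "finite (V // R)" using finite_quotient[OF fin equiv_type[OF R]] .
  ultimately show ?thesis by (simp add: bij_betw_same_card[symmetric] card_funcsetE)
qed

lemma card_constant_on_edges:
  assumes "finite V" "\<forall>e\<in>A. fst (ends e) \<in> V \<and> snd (ends e) \<in> V"
  shows "card {\<tau>\<in>V \<rightarrow>\<^sub>E {1..q}. \<forall>e\<in>A. \<tau> (fst (ends e)) = \<tau> (snd (ends e))}
         = q ^ num_comp V ends A"
  using card_respecting_PiE[OF equiv_conn_rel[of V ends A] assms(1), of "{1..q}"]
  unfolding constant_on_edges_iff_respects_conn_rel[OF assms(2)] num_comp_def by simp

locale swendsen_wang =
  fixes V :: "'v set" and E :: "'e set" and ends :: "'e \<Rightarrow> 'v \<times> 'v"
    and q :: nat and \<beta> :: real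
  assumes multigraph: "multigraph V E ends" and beta_nonneg: "\<beta> \<ge> 0" and q_pos: "q \<ge> 1"
begin

abbreviation "\<Omega> \<equiv> potts_configs V q"
abbreviation "Em \<equiv> mono_edges E ends"
abbreviation "\<Delta> \<equiv> max_deg V E ends"
abbreviation "P \<equiv> P_SW V E ends q \<beta>"

text \<open>\<open>weight \<sigma>\<close> is the unnormalised Potts measure; \<open>odds = p / (1 - p)\<close>.\<close>

definition weight :: "('v \<Rightarrow> nat) \<Rightarrow> real" where
  "weight \<sigma> = exp (\<beta> * real (card (Em \<sigma>)))"
definition odds :: "real" where
  "odds = exp \<beta> - 1"
definition q_comp :: "'e set \<Rightarrow> real" where
  "q_comp A = real q ^ num_comp V ends A"
definition mono_cfgs :: "'e set \<Rightarrow> ('v \<Rightarrow> nat) set" where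
  "mono_cfgs A = {\<sigma>\<in>\<Omega>. A \<subseteq> Em \<sigma>}"
definition flow :: "('v \<Rightarrow> nat) \<Rightarrow> ('v \<Rightarrow> nat) \<Rightarrow> real" where
  "flow \<sigma> \<tau> = (\<Sum>A\<in>Pow (Em \<sigma> \<inter> Em \<tau>). odds ^ card A / q_comp A)"

lemma finite_V: "finite V" and finite_E: "finite E"
  and ends_in_V: "e \<in> E \<Longrightarrow> fst (ends e) \<in> V \<and> snd (ends e) \<in> V"
  using multigraph unfolding multigraph_def by auto

lemma finite_Omega: "finite \<Omega>"
  unfolding potts_configs_def using finite_V by (simp add: finite_PiE)

lemma recolour_in_Omega: "\<sigma> \<in> \<Omega> \<Longrightarrow> v \<in> V \<Longrightarrow> c \<in> {1..q} \<Longrightarrow> \<sigma>(v := c) \<in> \<Omega>"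
  unfolding potts_configs_def by (auto simp: PiE_def Pi_def extensional_def)

lemma colour_in_range: "\<sigma> \<in> \<Omega> \<Longrightarrow> v \<in> V \<Longrightarrow> \<sigma> v \<in> {1..q}"
  unfolding potts_configs_def by auto

lemma weight_pos: "weight \<sigma> > 0"
  unfolding weight_def by simp

lemma odds_nonneg: "odds \<ge> 0"
  unfolding odds_def using beta_nonneg by simp

lemma q_comp_pos: "q_comp A > 0"
  unfolding q_comp_def using q_pos by simp

lemma mono_edges_subset: "Em \<sigma> \<subseteq> E"
  unfolding mono_edges_def by auto

lemma mono_cfgs_subset: "mono_cfgs A \<subseteq> \<Omega>"
  unfolding mono_cfgs_def by auto

lemma real_card_mono_cfgs:
  assumes "A \<subseteq> E"
  shows "real (card (mono_cfgs A)) = q_comp A"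
proof -
  have "mono_cfgs A = {\<tau>\<in>V \<rightarrow>\<^sub>E {1..q}. \<forall>e\<in>A. \<tau> (fst (ends e)) = \<tau> (snd (ends e))}"
    using assms unfolding mono_cfgs_def potts_configs_def mono_edges_def by auto
  moreover have "\<forall>e\<in>A. fst (ends e) \<in> V \<and> snd (ends e) \<in> V" using assms ends_in_V by blast
  ultimately show ?thesis
    unfolding q_comp_def using card_constant_on_edges[OF finite_V] by simp
qed

lemma flow_sym: "flow \<sigma> \<tau> = flow \<tau> \<sigma>"
  unfolding flow_def by (simp add: Int_commute)

lemma P_SW_eq: "P \<sigma> \<tau> = flow \<sigma> \<tau> / weight \<sigma>"
proof -
  have "(1 - exp (- \<beta>)) / exp (- \<beta>) = odds"
    unfolding odds_def by (simp add: field_simps exp_minus)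
  moreover have "exp (- \<beta>) ^ card (Em \<sigma>) = 1 / weight \<sigma>"
    unfolding weight_def by (simp add: exp_of_nat_mult[symmetric] exp_minus field_simps mult.commute)
  ultimately show ?thesis
    unfolding P_SW_def Let_def flow_def q_comp_def by simp
qed

subsection \<open>The joint Edwards--Sokal representation\<close>

lemma sum_Pow_filter:
  fixes f :: "'e set \<Rightarrow> real"
  assumes "finite E'"
  shows "(\<Sum>A\<in>Pow E'. f A * of_bool (A \<subseteq> B)) = (\<Sum>A\<in>Pow (E' \<inter> B). f A)"
proof -
  have "(\<Sum>A\<in>Pow E'. f A * of_bool (A \<subseteq> B)) = (\<Sum>A\<in>Pow E'. if A \<subseteq> B then f A else 0)"
    by (rule sum.cong) simp_all
  also have "\<dots> = sum f {A\<in>Pow E'. A \<subseteq> B}" by (rule sum.inter_filter[symmetric]) (simp add: assms)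
  also have "{A\<in>Pow E'. A \<subseteq> B} = Pow (E' \<inter> B)" by auto
  finally show ?thesis .
qed

lemma sum_of_bool_mono_cfgs:
  fixes g :: "('v \<Rightarrow> nat) \<Rightarrow> real"
  shows "(\<Sum>\<sigma>\<in>\<Omega>. of_bool (A \<subseteq> Em \<sigma>) * g \<sigma>) = (\<Sum>\<sigma>\<in>mono_cfgs A. g \<sigma>)"
proof -
  have "(\<Sum>\<sigma>\<in>\<Omega>. of_bool (A \<subseteq> Em \<sigma>) * g \<sigma>) = (\<Sum>\<sigma>\<in>\<Omega>. if A \<subseteq> Em \<sigma> then g \<sigma> else 0)"
    by (rule sum.cong) simp_all
  then show ?thesis unfolding mono_cfgs_def by (simp add: sum.inter_filter[OF finite_Omega])
qed

lemma exp_card_mono_edges_eq: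
  assumes "E' \<subseteq> E"
  shows "exp (\<beta> * real (card (E' \<inter> Em \<sigma>))) = (\<Sum>A\<in>Pow E'. odds ^ card A * of_bool (A \<subseteq> Em \<sigma>))"
proof -
  have fin: "finite E'" using finite_subset[OF assms finite_E] .
  have "(\<Sum>A\<in>Pow E'. odds ^ card A * of_bool (A \<subseteq> Em \<sigma>)) = (\<Sum>A\<in>Pow (E' \<inter> Em \<sigma>). odds ^ card A)"
    by (rule sum_Pow_filter[OF fin])
  also have "\<dots> = (1 + odds) ^ card (E' \<inter> Em \<sigma>)"
    by (rule sum_Pow_power) (use fin in simp)
  finally show ?thesis
    unfolding odds_def by (simp add: exp_of_nat_mult[symmetric] mult.commute)
qed

lemma weight_eq: "weight \<sigma> = (\<Sum>A\<in>Pow E. odds ^ card A * of_bool (A \<subseteq> Em \<sigma>))"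
  using exp_card_mono_edges_eq[of E \<sigma>] mono_edges_subset[of \<sigma>]
  unfolding weight_def by (simp add: Int_absorb1)

lemma flow_eq:
  "flow \<sigma> \<tau> = (\<Sum>A\<in>Pow E. odds ^ card A / q_comp A * of_bool (A \<subseteq> Em \<sigma>) * of_bool (A \<subseteq> Em \<tau>))"
  using sum_Pow_filter[OF finite_E, of "\<lambda>A. odds ^ card A / q_comp A" "Em \<sigma> \<inter> Em \<tau>"]
    mono_edges_subset[of \<sigma>]
  unfolding flow_def by (simp add: mult.assoc Int_absorb1 Int_assoc[symmetric] of_bool_conj)

text \<open>Swapping the sums over configurations and bond sets expresses both quadratic forms
  of the chain through the sums of \<open>g\<close> over the sets \<open>mono_cfgs A\<close>.\<close>

lemma sum_Pow_mono_cfgs: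
  assumes "E' \<subseteq> E"
  shows "(\<Sum>A\<in>Pow E'. odds ^ card A * (\<Sum>\<sigma>\<in>mono_cfgs A. G \<sigma>))
       = (\<Sum>\<sigma>\<in>\<Omega>. exp (\<beta> * real (card (E' \<inter> Em \<sigma>))) * G \<sigma>)"
  unfolding exp_card_mono_edges_eq[OF assms] sum_of_bool_mono_cfgs[symmetric]
  by (simp add: sum_distrib_left sum_distrib_right mult.assoc sum.swap[of _ "Pow E'"])

lemma sum_weight_mult:
  "(\<Sum>\<sigma>\<in>\<Omega>. weight \<sigma> * G \<sigma>) = (\<Sum>A\<in>Pow E. odds ^ card A * (\<Sum>\<sigma>\<in>mono_cfgs A. G \<sigma>))"
  unfolding sum_Pow_mono_cfgs[OF order_refl] weight_def
  using mono_edges_subset by (simp add: Int_absorb1)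

lemma flow_quadratic_form:
  "(\<Sum>\<sigma>\<in>\<Omega>. \<Sum>\<tau>\<in>\<Omega>. flow \<sigma> \<tau> * g \<sigma> * h \<tau>)
   = (\<Sum>A\<in>Pow E. odds ^ card A / q_comp A * (\<Sum>\<sigma>\<in>mono_cfgs A. g \<sigma>) * (\<Sum>\<sigma>\<in>mono_cfgs A. h \<sigma>))"
proof -
  have "(\<Sum>\<sigma>\<in>\<Omega>. \<Sum>\<tau>\<in>\<Omega>. flow \<sigma> \<tau> * g \<sigma> * h \<tau>)
     = (\<Sum>\<sigma>\<in>\<Omega>. \<Sum>\<tau>\<in>\<Omega>. \<Sum>A\<in>Pow E.
          odds ^ card A / q_comp A * (of_bool (A \<subseteq> Em \<sigma>) * g \<sigma>) * (of_bool (A \<subseteq> Em \<tau>) * h \<tau>))"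
    unfolding flow_eq sum_distrib_right by (intro sum.cong refl) (simp add: mult_ac)
  also have "\<dots> = (\<Sum>\<sigma>\<in>\<Omega>. \<Sum>A\<in>Pow E. \<Sum>\<tau>\<in>\<Omega>.
          odds ^ card A / q_comp A * (of_bool (A \<subseteq> Em \<sigma>) * g \<sigma>) * (of_bool (A \<subseteq> Em \<tau>) * h \<tau>))"
    by (rule sum.cong[OF refl], rule sum.swap)
  also have "\<dots> = (\<Sum>A\<in>Pow E. \<Sum>\<sigma>\<in>\<Omega>. \<Sum>\<tau>\<in>\<Omega>.
          odds ^ card A / q_comp A * (of_bool (A \<subseteq> Em \<sigma>) * g \<sigma>) * (of_bool (A \<subseteq> Em \<tau>) * h \<tau>))"
    by (rule sum.swap)
  also have "\<dots> = (\<Sum>A\<in>Pow E. odds ^ card A / q_comp A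
          * ((\<Sum>\<sigma>\<in>\<Omega>. of_bool (A \<subseteq> Em \<sigma>) * g \<sigma>) * (\<Sum>\<tau>\<in>\<Omega>. of_bool (A \<subseteq> Em \<tau>) * h \<tau>)))"
    unfolding sum_product by (simp add: sum_distrib_left mult.assoc)
  finally show ?thesis unfolding sum_of_bool_mono_cfgs by (simp add: mult.assoc)
qed

lemma sum_flow: "(\<Sum>\<tau>\<in>\<Omega>. flow \<sigma> \<tau>) = weight \<sigma>"
proof -
  have "(\<Sum>\<tau>\<in>\<Omega>. flow \<sigma> \<tau>)
      = (\<Sum>A\<in>Pow E. odds ^ card A / q_comp A * of_bool (A \<subseteq> Em \<sigma>)
          * (\<Sum>\<tau>\<in>\<Omega>. of_bool (A \<subseteq> Em \<tau>) * 1))"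
    unfolding flow_eq by (subst sum.swap) (simp add: sum_distrib_left)
  also have "\<dots> = (\<Sum>A\<in>Pow E. odds ^ card A / q_comp A * of_bool (A \<subseteq> Em \<sigma>) * real (card (mono_cfgs A)))"
    unfolding sum_of_bool_mono_cfgs by simp
  also have "\<dots> = (\<Sum>A\<in>Pow E. odds ^ card A * of_bool (A \<subseteq> Em \<sigma>))"
    using real_card_mono_cfgs q_comp_pos by (intro sum.cong) (auto simp: less_imp_neq[symmetric])
  finally show ?thesis unfolding weight_eq .
qed

subsection \<open>The Dirichlet form\<close>

definition dirichlet :: "(('v \<Rightarrow> nat) \<Rightarrow> real) \<Rightarrow> real" where
  "dirichlet g = (\<Sum>\<sigma>\<in>\<Omega>. weight \<sigma> * (g \<sigma>)\<^sup>2) - (\<Sum>\<sigma>\<in>\<Omega>. \<Sum>\<tau>\<in>\<Omega>. flow \<sigma> \<tau> * g \<sigma> * g \<tau>)"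

definition sq_dev :: "'e set \<Rightarrow> (('v \<Rightarrow> nat) \<Rightarrow> real) \<Rightarrow> real" where
  "sq_dev A g = (\<Sum>\<sigma>\<in>mono_cfgs A. (g \<sigma>)\<^sup>2) - (\<Sum>\<sigma>\<in>mono_cfgs A. g \<sigma>)\<^sup>2 / q_comp A"

definition local_var :: "'v \<Rightarrow> (('v \<Rightarrow> nat) \<Rightarrow> real) \<Rightarrow> real" where
  "local_var v g = (\<Sum>\<sigma>\<in>\<Omega>. weight \<sigma> * (\<Sum>c\<in>{1..q}. (g \<sigma> - g (\<sigma>(v := c)))\<^sup>2))"

definition incident :: "'v \<Rightarrow> 'e set" where
  "incident v = {e\<in>E. fst (ends e) = v \<or> snd (ends e) = v}"

lemma dirichlet_eq: "dirichlet g = (\<Sum>A\<in>Pow E. odds ^ card A * sq_dev A g)"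
  unfolding dirichlet_def sq_dev_def sum_weight_mult flow_quadratic_form
  by (simp add: power2_eq_square right_diff_distrib sum_subtractf mult.assoc)

lemma sq_dev_nonneg: "A \<subseteq> E \<Longrightarrow> sq_dev A g \<ge> 0"
  using square_sum_le_card_mult_sum_squares[of g "mono_cfgs A"] real_card_mono_cfgs[of A] q_comp_pos[of A]
  unfolding sq_dev_def by (simp add: field_simps)

lemma dirichlet_nonneg: "dirichlet g \<ge> 0"
  unfolding dirichlet_eq using odds_nonneg sq_dev_nonneg by (intro sum_nonneg) auto

lemma card_incident_le: "v \<in> V \<Longrightarrow> card (incident v) \<le> \<Delta>"
  unfolding max_deg_def incident_def deg_def using finite_V by (intro Max_ge) auto

lemma card_mono_edges_le: "card (Em \<sigma>) \<le> card ((E - incident v) \<inter> Em \<sigma>) + card (incident v)"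
proof -
  have "Em \<sigma> \<subseteq> ((E - incident v) \<inter> Em \<sigma>) \<union> incident v" using mono_edges_subset by auto
  then have "card (Em \<sigma>) \<le> card (((E - incident v) \<inter> Em \<sigma>) \<union> incident v)"
    by (rule card_mono[rotated]) (use finite_E in \<open>auto simp: incident_def\<close>)
  then show ?thesis using card_Un_le order_trans by blast
qed

lemma weight_le_drop_incident:
  assumes "v \<in> V"
  shows "exp (- \<beta> * real \<Delta>) * weight \<sigma> \<le> exp (\<beta> * real (card ((E - incident v) \<inter> Em \<sigma>)))"
proof -
  have "real (card (Em \<sigma>)) \<le> real (card ((E - incident v) \<inter> Em \<sigma>)) + real \<Delta>"
    using card_mono_edges_le[of \<sigma> v] card_incident_le[OF assms] by linarith
  then show ?thesis
    unfolding weight_def exp_add[symmetric] using beta_nonneg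
    by (simp add: algebra_simps mult_left_mono flip: distrib_left)
qed

lemma mono_cfgs_recolour_closed:
  assumes "A \<subseteq> E - incident v" "v \<in> V"
  shows "\<forall>\<sigma>\<in>mono_cfgs A. \<forall>c\<in>{1..q}. \<sigma>(v := c) \<in> mono_cfgs A"
  using assms recolour_in_Omega
  unfolding mono_cfgs_def mono_edges_def incident_def by (fastforce simp: subset_iff)

text \<open>Comparison with the heat bath at \<open>v\<close>: the bond sets avoiding the edges at \<open>v\<close> already
  contribute a recolouring-invariant family of sets \<open>mono_cfgs A\<close>, on each of which the
  variance dominates the local variation at \<open>v\<close>; dropping the edges at \<open>v\<close> costs a factor
  at most \<open>exp (\<beta> \<Delta>)\<close> in the weights.\<close>

lemma dirichlet_ge_local_var:
  assumes v: "v \<in> V"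
  shows "dirichlet g \<ge> exp (- \<beta> * real \<Delta>) / (2 * real q) * local_var v g"
proof -
  define L where "L \<sigma> = (\<Sum>c\<in>{1..q}. (g \<sigma> - g (\<sigma>(v := c)))\<^sup>2)" for \<sigma>
  define E' where "E' = E - incident v"
  have "exp (- \<beta> * real \<Delta>) * local_var v g \<le> (\<Sum>\<sigma>\<in>\<Omega>. exp (\<beta> * real (card (E' \<inter> Em \<sigma>))) * L \<sigma>)"
    unfolding local_var_def sum_distrib_left L_def[symmetric]
  proof (intro sum_mono)
    fix \<sigma>
    have "L \<sigma> \<ge> 0" unfolding L_def by (simp add: sum_nonneg)
    then show "exp (- \<beta> * real \<Delta>) * (weight \<sigma> * L \<sigma>) \<le> exp (\<beta> * real (card (E' \<inter> Em \<sigma>))) * L \<sigma>"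
      using mult_right_mono[OF weight_le_drop_incident[OF v]] unfolding E'_def by (simp add: mult.assoc)
  qed
  also have "\<dots> = (\<Sum>A\<in>Pow E'. odds ^ card A * (\<Sum>\<sigma>\<in>mono_cfgs A. L \<sigma>))"
    unfolding E'_def by (rule sum_Pow_mono_cfgs[symmetric]) auto
  also have "\<dots> \<le> (\<Sum>A\<in>Pow E'. odds ^ card A * (2 * real q * sq_dev A g))"
  proof (intro sum_mono mult_left_mono)
    fix A
    assume "A \<in> Pow E'"
    then have A: "A \<subseteq> E - incident v" unfolding E'_def by simp
    then have AE: "A \<subseteq> E" by blast
    have "\<forall>\<sigma>\<in>mono_cfgs A. \<sigma> v \<in> {1..q}"
      using colour_in_range mono_cfgs_subset v by blast
    then have "1 / (2 * real (card {1..q})) * (\<Sum>\<sigma>\<in>mono_cfgs A. L \<sigma>) \<le> sq_dev A g"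
      unfolding sq_dev_def L_def using A q_pos real_card_mono_cfgs[OF AE]
      by (intro variance_ge_recolour_variation mono_cfgs_recolour_closed[OF A v]
          finite_subset[OF mono_cfgs_subset finite_Omega]) auto
    then show "(\<Sum>\<sigma>\<in>mono_cfgs A. L \<sigma>) \<le> 2 * real q * sq_dev A g"
      using q_pos by (simp add: field_simps)
  qed (use odds_nonneg in simp)
  also have "\<dots> \<le> 2 * real q * dirichlet g"
    unfolding dirichlet_eq E'_def using odds_nonneg sq_dev_nonneg
    by (auto simp: sum_distrib_left mult_ac intro!: sum_mono2 finite_E)
  finally show ?thesis using q_pos by (simp add: field_simps)
qed

subsection \<open>Heat-bath Glauber dynamics\<close>

definition heat_bath :: "'v \<Rightarrow> (('v \<Rightarrow> nat) \<Rightarrow> real) \<Rightarrow> ('v \<Rightarrow> nat) \<Rightarrow> real" where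
  "heat_bath v h \<sigma> = weighted_mean {1..q} (\<lambda>c. weight (\<sigma>(v := c))) (\<lambda>c. h (\<sigma>(v := c)))"
definition glauber :: "(('v \<Rightarrow> nat) \<Rightarrow> real) \<Rightarrow> ('v \<Rightarrow> nat) \<Rightarrow> real" where
  "glauber h \<sigma> = (\<Sum>v\<in>V. heat_bath v h \<sigma>) / real (card V)"
definition ip :: "(('v \<Rightarrow> nat) \<Rightarrow> real) \<Rightarrow> (('v \<Rightarrow> nat) \<Rightarrow> real) \<Rightarrow> real" where
  "ip f g = (\<Sum>\<sigma>\<in>\<Omega>. weight \<sigma> * f \<sigma> * g \<sigma>)"

abbreviation "local_norm v \<sigma> \<equiv> (\<Sum>c\<in>{1..q}. weight (\<sigma>(v := c)))"

lemma local_norm_pos: "local_norm v \<sigma> > 0"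
  using q_pos by (intro sum_pos) (auto simp: weight_pos)

lemma ip_heat_bath:
  "ip h (heat_bath v g)
   = (\<Sum>\<sigma>\<in>\<Omega>. \<Sum>c\<in>{1..q}. weight \<sigma> * weight (\<sigma>(v := c)) / local_norm v \<sigma> * h \<sigma> * g (\<sigma>(v := c)))"
  unfolding ip_def heat_bath_def weighted_mean_def
  by (rule sum.cong) (simp_all add: sum_distrib_left sum_divide_distrib mult_ac)

lemma heat_bath_self_adjoint:
  assumes "v \<in> V"
  shows "ip h (heat_bath v g) = ip g (heat_bath v h)"
proof -
  define G where "G \<sigma> \<tau> = weight \<sigma> * weight \<tau> / local_norm v \<sigma> * h \<sigma> * g \<tau>" for \<sigma> \<tau>
  have "ip h (heat_bath v g) = (\<Sum>\<sigma>\<in>\<Omega>. \<Sum>c\<in>{1..q}. G \<sigma> (\<sigma>(v := c)))"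
    unfolding ip_heat_bath G_def ..
  also have "\<dots> = (\<Sum>\<sigma>\<in>\<Omega>. \<Sum>c\<in>{1..q}. G (\<sigma>(v := c)) \<sigma>)"
    using recolour_in_Omega colour_in_range assms
    by (intro sum_recolour_swap finite_Omega) auto
  also have "\<dots> = ip g (heat_bath v h)"
    unfolding ip_heat_bath G_def by (intro sum.cong refl) (simp add: mult_ac)
  finally show ?thesis .
qed

lemma heat_bath_const: "heat_bath v (\<lambda>_. a) \<sigma> = a"
  using local_norm_pos[of \<sigma> v]
  unfolding heat_bath_def weighted_mean_def by (simp add: sum_distrib_right[symmetric])

lemma sum_weight_heat_bath:
  "v \<in> V \<Longrightarrow> (\<Sum>\<sigma>\<in>\<Omega>. weight \<sigma> * heat_bath v g \<sigma>) = (\<Sum>\<sigma>\<in>\<Omega>. weight \<sigma> * g \<sigma>)"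
  using heat_bath_self_adjoint[of v "\<lambda>_. 1" g] unfolding ip_def heat_bath_const by simp

lemma ip_glauber: "ip h (glauber g) = (\<Sum>v\<in>V. ip h (heat_bath v g)) / real (card V)"
  unfolding ip_def glauber_def
  by (simp add: sum_divide_distrib sum_distrib_left sum.swap[of _ V] mult_ac)

lemma glauber_self_adjoint: "ip h (glauber g) = ip g (glauber h)"
  unfolding ip_glauber using heat_bath_self_adjoint by (simp cong: sum.cong)

lemma sum_weight_glauber:
  assumes "V \<noteq> {}"
  shows "(\<Sum>\<sigma>\<in>\<Omega>. weight \<sigma> * glauber g \<sigma>) = (\<Sum>\<sigma>\<in>\<Omega>. weight \<sigma> * g \<sigma>)"
proof -
  have "(\<Sum>\<sigma>\<in>\<Omega>. weight \<sigma> * glauber g \<sigma>) = ip (\<lambda>_. 1) (glauber g)" unfolding ip_def by simp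
  also have "\<dots> = (\<Sum>v\<in>V. \<Sum>\<sigma>\<in>\<Omega>. weight \<sigma> * g \<sigma>) / real (card V)"
    unfolding ip_glauber using sum_weight_heat_bath unfolding ip_def by (simp cong: sum.cong)
  finally show ?thesis using assms finite_V by simp
qed

lemma weight_recolour_le:
  assumes "v \<in> V"
  shows "weight (\<sigma>(v := c)) \<le> exp (\<beta> * real \<Delta>) * weight (\<sigma>(v := c'))"
proof -
  have "Em (\<sigma>(v := c)) \<subseteq> Em (\<sigma>(v := c')) \<union> incident v"
    unfolding mono_edges_def incident_def by auto
  then have "card (Em (\<sigma>(v := c))) \<le> card (Em (\<sigma>(v := c')) \<union> incident v)"
    by (rule card_mono[rotated]) (use finite_E in \<open>auto simp: incident_def mono_edges_def\<close>)
  then have "card (Em (\<sigma>(v := c))) \<le> card (Em (\<sigma>(v := c'))) + card (incident v)"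
    using card_Un_le order_trans by blast
  then have "real (card (Em (\<sigma>(v := c)))) \<le> real \<Delta> + real (card (Em (\<sigma>(v := c'))))"
    using card_incident_le[OF assms] by linarith
  then show ?thesis
    unfolding weight_def exp_add[symmetric] using beta_nonneg
    by (simp add: mult_left_mono flip: distrib_left)
qed

lemma recolour_prob_le:
  assumes "v \<in> V"
  shows "weight (\<sigma>(v := c)) / local_norm v \<sigma> \<le> exp (\<beta> * real \<Delta>) / real q"
proof -
  have "real q * weight (\<sigma>(v := c)) \<le> (\<Sum>c'\<in>{1..q}. exp (\<beta> * real \<Delta>) * weight (\<sigma>(v := c')))"
    using sum_mono[of "{1..q}" "\<lambda>_. weight (\<sigma>(v := c))", OF weight_recolour_le[OF assms]] by simp
  also have "\<dots> = exp (\<beta> * real \<Delta>) * local_norm v \<sigma>" by (simp add: sum_distrib_left)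
  finally show ?thesis
    using local_norm_pos[of \<sigma> v] q_pos by (simp add: field_simps)
qed

text \<open>The usual symmetrisation: \<open>ip h h - ip h (heat_bath v h)\<close> is half the sum over
  pairs differing at \<open>v\<close> of \<open>\<pi>(\<sigma>) P(\<sigma>, \<tau>) (h \<sigma> - h \<tau>)\<^sup>2\<close>.\<close>

lemma heat_bath_deficit_le:
  assumes v: "v \<in> V"
  shows "ip h h - ip h (heat_bath v h) \<le> exp (\<beta> * real \<Delta>) / (2 * real q) * local_var v h"
proof -
  define T where "T \<sigma> \<tau> = weight \<sigma> * weight \<tau> / local_norm v \<sigma> * h \<sigma> * (h \<sigma> - h \<tau>)" for \<sigma> \<tau>
  define S where "S = (\<Sum>\<sigma>\<in>\<Omega>. \<Sum>c\<in>{1..q}. T \<sigma> (\<sigma>(v := c)))"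
  have one: "(\<Sum>c\<in>{1..q}. weight (\<sigma>(v := c)) / local_norm v \<sigma>) = 1" for \<sigma>
    using local_norm_pos[of \<sigma> v] by (simp add: sum_divide_distrib[symmetric])
  have "ip h h = (\<Sum>\<sigma>\<in>\<Omega>. weight \<sigma> * h \<sigma> * h \<sigma> * (\<Sum>c\<in>{1..q}. weight (\<sigma>(v := c)) / local_norm v \<sigma>))"
    unfolding ip_def one by simp
  also have "\<dots> = (\<Sum>\<sigma>\<in>\<Omega>. \<Sum>c\<in>{1..q}. weight \<sigma> * weight (\<sigma>(v := c)) / local_norm v \<sigma> * h \<sigma> * h \<sigma>)"
    by (simp add: sum_distrib_left mult_ac)
  finally have S: "ip h h - ip h (heat_bath v h) = S"
    unfolding ip_heat_bath S_def T_def by (simp add: sum_subtractf[symmetric] right_diff_distrib)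
  have "S = (\<Sum>\<sigma>\<in>\<Omega>. \<Sum>c\<in>{1..q}. T (\<sigma>(v := c)) \<sigma>)"
    unfolding S_def using recolour_in_Omega colour_in_range v
    by (intro sum_recolour_swap finite_Omega) auto
  then have "2 * S = (\<Sum>\<sigma>\<in>\<Omega>. \<Sum>c\<in>{1..q}. T \<sigma> (\<sigma>(v := c)) + T (\<sigma>(v := c)) \<sigma>)"
    unfolding S_def by (simp add: sum.distrib)
  also have "\<dots> = (\<Sum>\<sigma>\<in>\<Omega>. \<Sum>c\<in>{1..q}.
      weight \<sigma> * (weight (\<sigma>(v := c)) / local_norm v \<sigma>) * (h \<sigma> - h (\<sigma>(v := c)))\<^sup>2)"
    unfolding T_def using local_norm_pos[of _ v]
    by (intro sum.cong refl) (simp add: power2_eq_square field_simps less_imp_neq[symmetric])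
  also have "\<dots> \<le> (\<Sum>\<sigma>\<in>\<Omega>. \<Sum>c\<in>{1..q}.
      weight \<sigma> * (exp (\<beta> * real \<Delta>) / real q) * (h \<sigma> - h (\<sigma>(v := c)))\<^sup>2)"
    by (intro sum_mono mult_right_mono mult_left_mono recolour_prob_le[OF v])
      (auto simp: weight_pos less_imp_le)
  also have "\<dots> = exp (\<beta> * real \<Delta>) / real q * local_var v h"
    unfolding local_var_def by (simp add: sum_distrib_left mult_ac)
  finally show ?thesis using S by simp
qed

lemma glauber_deficit_le:
  assumes "V \<noteq> {}"
  shows "real (card V) * (ip h h - ip h (glauber h))
         \<le> exp (\<beta> * real \<Delta>) / (2 * real q) * (\<Sum>v\<in>V. local_var v h)"
proof -
  have "card V > 0" using assms finite_V by (simp add: card_gt_0_iff)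
  then have "real (card V) * (ip h h - ip h (glauber h)) = (\<Sum>v\<in>V. ip h h - ip h (heat_bath v h))"
    unfolding ip_glauber by (simp add: sum_subtractf right_diff_distrib)
  also have "\<dots> \<le> (\<Sum>v\<in>V. exp (\<beta> * real \<Delta>) / (2 * real q) * local_var v h)"
    by (intro sum_mono heat_bath_deficit_le)
  finally show ?thesis by (simp add: sum_distrib_left)
qed

subsection \<open>Contraction of the Glauber dynamics\<close>

definition edges_between :: "'v \<Rightarrow> 'v \<Rightarrow> 'e set" where
  "edges_between u v = {e\<in>E. ends e = (u, v) \<or> ends e = (v, u)}"
definition edge_mult :: "'v \<Rightarrow> 'v \<Rightarrow> real" where
  "edge_mult u v = real (card (edges_between u v))"

definition site_lipschitz :: "(('v \<Rightarrow> nat) \<Rightarrow> real) \<Rightarrow> ('v \<Rightarrow> real) \<Rightarrow> bool" where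
  "site_lipschitz h d \<longleftrightarrow>
  (\<forall>u\<in>V. \<forall>\<sigma>\<in>\<Omega>. \<forall>c\<in>{1..q}. \<bar>h \<sigma> - h (\<sigma>(u := c))\<bar> \<le> d u)"

lemma real_card_mono_edges:
  "real (card (Em \<rho>)) = (\<Sum>e\<in>E. of_bool (\<rho> (fst (ends e)) = \<rho> (snd (ends e))))"
proof -
  have "Em \<rho> = E \<inter> {e. \<rho> (fst (ends e)) = \<rho> (snd (ends e))}" unfolding mono_edges_def by auto
  then show ?thesis using sum_of_bool_eq[OF finite_E finite_E] by metis
qed

lemma edge_mult_eq: "edge_mult u v = (\<Sum>e\<in>E. of_bool (e \<in> edges_between u v))"
proof -
  have "edges_between u v = E \<inter> {e. e \<in> edges_between u v}" unfolding edges_between_def by auto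
  then show ?thesis unfolding edge_mult_def using sum_of_bool_eq[OF finite_E finite_E] by metis
qed

lemma mono_indicator_recolour_two:
  fixes \<sigma> :: "'v \<Rightarrow> nat"
  assumes "u \<noteq> v" "e \<in> E"
  defines "monochr \<rho> \<equiv> of_bool (\<rho> (fst (ends e)) = \<rho> (snd (ends e))) :: real"
  shows "monochr ((\<sigma>(u := c))(v := c')) - monochr (\<sigma>(v := c'))
          - of_bool (e \<in> edges_between u v) * (of_bool (c' = c) - of_bool (c' = \<sigma> u))
        = (if fst (ends e) = v \<or> snd (ends e) = v then 0 else monochr (\<sigma>(u := c)) - monochr \<sigma>)"
proof -
  obtain x y where xy: "ends e = (x, y)" by (cases "ends e")
  have "(e \<in> edges_between u v) = ((x = u \<and> y = v) \<or> (x = v \<and> y = u))"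
    unfolding edges_between_def using assms(2) xy by auto
  then show ?thesis
    unfolding monochr_def xy fst_conv snd_conv using assms(1)
    by (cases "x = u"; cases "y = u"; cases "x = v"; cases "y = v") simp_all
qed

lemma weight_recolour_shift:
  assumes "u \<noteq> v"
  obtains \<kappa> where "\<And>c'. weight ((\<sigma>(u := c))(v := c'))
      = exp \<kappa> * (weight (\<sigma>(v := c')) * exp (\<beta> * edge_mult u v * (of_bool (c' = c) - of_bool (c' = \<sigma> u))))"
proof -
  define monochr where "monochr \<rho> e = (of_bool (\<rho> (fst (ends e)) = \<rho> (snd (ends e))) :: real)"
    for \<rho> :: "'v \<Rightarrow> nat" and e
  define \<kappa> where "\<kappa> = (\<Sum>e\<in>E. if fst (ends e) = v \<or> snd (ends e) = v then 0 else monochr (\<sigma>(u := c)) e - monochr \<sigma> e)"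
  have "real (card (Em ((\<sigma>(u := c))(v := c')))) - real (card (Em (\<sigma>(v := c'))))
      - edge_mult u v * (of_bool (c' = c) - of_bool (c' = \<sigma> u)) = \<kappa>" for c'
  proof -
    have "real (card (Em ((\<sigma>(u := c))(v := c')))) - real (card (Em (\<sigma>(v := c'))))
        - edge_mult u v * (of_bool (c' = c) - of_bool (c' = \<sigma> u))
      = (\<Sum>e\<in>E. monochr ((\<sigma>(u := c))(v := c')) e - monochr (\<sigma>(v := c')) e
          - of_bool (e \<in> edges_between u v) * (of_bool (c' = c) - of_bool (c' = \<sigma> u)))"
      unfolding real_card_mono_edges edge_mult_eq monochr_def by (simp add: sum_subtractf sum_distrib_right)
    also have "\<dots> = \<kappa>"
      unfolding \<kappa>_def monochr_def by (rule sum.cong[OF refl], rule mono_indicator_recolour_two[OF assms])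
    finally show ?thesis .
  qed
  then have "\<beta> * real (card (Em ((\<sigma>(u := c))(v := c')))) = \<beta> * \<kappa>
      + (\<beta> * real (card (Em (\<sigma>(v := c')))) + \<beta> * edge_mult u v * (of_bool (c' = c) - of_bool (c' = \<sigma> u)))"
    for c'
    by (simp add: algebra_simps flip: distrib_left)
  then have "weight ((\<sigma>(u := c))(v := c'))
      = exp (\<beta> * \<kappa>) * (weight (\<sigma>(v := c')) * exp (\<beta> * edge_mult u v * (of_bool (c' = c) - of_bool (c' = \<sigma> u))))"
    for c'
    unfolding weight_def by (simp only: exp_add)
  then show ?thesis by (rule that)
qed

text \<open>Changing the colour of \<open>u \<noteq> v\<close> changes both the averaged function (by at most
  \<open>d u\<close>) and the conditional weights at \<open>v\<close>; the latter change is two exponential tilts.\<close>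

lemma heat_bath_lipschitz:
  assumes L: "site_lipschitz h d" and u: "u \<in> V" and v: "v \<in> V" and uv: "u \<noteq> v"
    and \<sigma>: "\<sigma> \<in> \<Omega>" and c: "c \<in> {1..q}"
  shows "\<bar>heat_bath v h \<sigma> - heat_bath v h (\<sigma>(u := c))\<bar> \<le> d u + \<beta> * edge_mult u v / 2 * d v"
proof -
  define \<sigma>' where "\<sigma>' = \<sigma>(u := c)"
  define t where "t = \<beta> * edge_mult u v"
  define W where "W c' = weight (\<sigma>(v := c'))" for c'
  define R where "R c' = W c' * exp (- t * of_bool (c' = \<sigma> u))" for c'
  define H' where "H' c' = h (\<sigma>'(v := c'))" for c'
  have \<sigma>': "\<sigma>' \<in> \<Omega>" unfolding \<sigma>'_def using recolour_in_Omega[OF \<sigma> u c] .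
  have "\<bar>heat_bath v h \<sigma> - weighted_mean {1..q} W H'\<bar> \<le> d u"
    unfolding heat_bath_def W_def[symmetric]
  proof (rule weighted_mean_diff_le)
    show "\<forall>c'\<in>{1..q}. \<bar>h (\<sigma>(v := c')) - H' c'\<bar> \<le> d u"
    proof
      fix c'
      assume c': "c' \<in> {1..q}"
      have "\<sigma>'(v := c') = (\<sigma>(v := c'))(u := c)" unfolding \<sigma>'_def using uv by (rule fun_upd_twist)
      then show "\<bar>h (\<sigma>(v := c')) - H' c'\<bar> \<le> d u"
        using L u c recolour_in_Omega[OF \<sigma> v c'] unfolding H'_def site_lipschitz_def by simp
    qed
  qed (use q_pos in \<open>auto simp: W_def weight_pos\<close>)
  moreover have "\<bar>weighted_mean {1..q} W H' - heat_bath v h \<sigma>'\<bar> \<le> t / 2 * d v"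
  proof -
    obtain \<kappa> where \<kappa>: "\<And>c'. weight (\<sigma>'(v := c'))
        = exp \<kappa> * (W c' * exp (t * (of_bool (c' = c) - of_bool (c' = \<sigma> u))))"
      using weight_recolour_shift[OF uv, of \<sigma> c] unfolding \<sigma>'_def W_def t_def by blast
    have W_eq: "W = (\<lambda>c'. R c' * exp (t * of_bool (c' = \<sigma> u)))"
      unfolding R_def by (simp add: mult.assoc exp_add[symmetric])
    have W'_eq: "(\<lambda>c'. weight (\<sigma>'(v := c'))) = (\<lambda>c'. exp \<kappa> * (R c' * exp (t * of_bool (c' = c))))"
      unfolding \<kappa> R_def by (simp add: mult.assoc exp_add[symmetric] algebra_simps)
    have "\<forall>c1\<in>{1..q}. \<forall>c2\<in>{1..q}. \<bar>H' c1 - H' c2\<bar> \<le> d v"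
      using L v recolour_in_Omega[OF \<sigma>' v] unfolding H'_def site_lipschitz_def by fastforce
    moreover have "t \<ge> 0" unfolding t_def edge_mult_def using beta_nonneg by simp
    ultimately show ?thesis
      unfolding heat_bath_def H'_def[symmetric] W_eq W'_eq using colour_in_range[OF \<sigma> u] c
      by (intro weighted_mean_two_tilts) (auto simp: R_def W_def weight_pos)
  qed
  ultimately show ?thesis unfolding \<sigma>'_def t_def by linarith
qed

definition contract :: "('v \<Rightarrow> real) \<Rightarrow> 'v \<Rightarrow> real" where
  "contract d u = (1 - 1 / real (card V)) * d u
    + (1 / real (card V)) * (\<Sum>v\<in>V - {u}. \<beta> * edge_mult u v / 2 * d v)"

lemma card_V_ge_1: "V \<noteq> {} \<Longrightarrow> real (card V) \<ge> 1"
  using finite_V by (simp add: Suc_le_eq card_gt_0_iff)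

lemma glauber_lipschitz:
  assumes L: "site_lipschitz h d" and V: "V \<noteq> {}"
  shows "site_lipschitz (glauber h) (contract d)"
  unfolding site_lipschitz_def
proof (intro ballI)
  fix u \<sigma> c
  assume u: "u \<in> V" and \<sigma>: "\<sigma> \<in> \<Omega>" and c: "c \<in> {1..q}"
  have n: "real (card V) \<ge> 1" using card_V_ge_1[OF V] .
  have "heat_bath u h (\<sigma>(u := c)) = heat_bath u h \<sigma>" unfolding heat_bath_def by simp
  then have "(\<Sum>v\<in>V. heat_bath v h \<sigma> - heat_bath v h (\<sigma>(u := c)))
      = (\<Sum>v\<in>V - {u}. heat_bath v h \<sigma> - heat_bath v h (\<sigma>(u := c)))"
    using sum.remove[OF finite_V u, of "\<lambda>v. heat_bath v h \<sigma> - heat_bath v h (\<sigma>(u := c))"] by simp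
  also have "\<bar>\<dots>\<bar> \<le> (\<Sum>v\<in>V - {u}. d u + \<beta> * edge_mult u v / 2 * d v)"
    by (rule order.trans[OF sum_abs sum_mono]) (use heat_bath_lipschitz[OF L u _ _ \<sigma> c] in auto)
  also have "\<dots> = (real (card V) - 1) * d u + (\<Sum>v\<in>V - {u}. \<beta> * edge_mult u v / 2 * d v)"
    using finite_V u n by (simp add: sum.distrib card_Diff_singleton of_nat_diff)
  finally have bound: "\<bar>\<Sum>v\<in>V. heat_bath v h \<sigma> - heat_bath v h (\<sigma>(u := c))\<bar>
      \<le> (real (card V) - 1) * d u + (\<Sum>v\<in>V - {u}. \<beta> * edge_mult u v / 2 * d v)" .
  have "glauber h \<sigma> - glauber h (\<sigma>(u := c))
      = (\<Sum>v\<in>V. heat_bath v h \<sigma> - heat_bath v h (\<sigma>(u := c))) / real (card V)"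
    unfolding glauber_def by (simp add: sum_subtractf diff_divide_distrib)
  then have "\<bar>glauber h \<sigma> - glauber h (\<sigma>(u := c))\<bar>
      \<le> ((real (card V) - 1) * d u + (\<Sum>v\<in>V - {u}. \<beta> * edge_mult u v / 2 * d v)) / real (card V)"
    using bound n by (simp add: abs_divide divide_right_mono)
  also have "\<dots> = contract d u" unfolding contract_def using n by (simp add: field_simps)
  finally show "\<bar>glauber h \<sigma> - glauber h (\<sigma>(u := c))\<bar> \<le> contract d u" .
qed

lemma sum_edge_mult_le:
  assumes "v \<in> V"
  shows "(\<Sum>u\<in>V - {v}. edge_mult u v) \<le> real \<Delta>"
proof -
  have "(\<Sum>u\<in>V - {v}. card (edges_between u v)) = card (\<Union>u\<in>V - {v}. edges_between u v)"
    using finite_V finite_E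
    by (intro card_UN_disjoint[symmetric]) (auto simp: edges_between_def)
  also have "\<dots> \<le> card (incident v)"
    by (rule card_mono) (use finite_E in \<open>auto simp: incident_def edges_between_def\<close>)
  also have "\<dots> \<le> \<Delta>" by (rule card_incident_le[OF assms])
  finally show ?thesis unfolding edge_mult_def by (simp flip: of_nat_sum)
qed

lemma sum_off_diagonal_swap:
  fixes g :: "'v \<Rightarrow> 'v \<Rightarrow> real"
  shows "(\<Sum>u\<in>V. \<Sum>v\<in>V - {u}. g u v) = (\<Sum>v\<in>V. \<Sum>u\<in>V - {v}. g u v)"
proof -
  have off_diagonal: "(\<Sum>x\<in>V - {y}. f x) = (\<Sum>x\<in>V. if x \<noteq> y then f x else 0)" for f :: "'v \<Rightarrow> real" and y
    using sum.inter_filter[OF finite_V, of f "\<lambda>x. x \<noteq> y"] by (simp add: set_diff_eq)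
  have "(\<Sum>u\<in>V. \<Sum>v\<in>V - {u}. g u v) = (\<Sum>u\<in>V. \<Sum>v\<in>V. if u \<noteq> v then g u v else 0)"
    unfolding off_diagonal by (simp add: eq_commute)
  also have "\<dots> = (\<Sum>v\<in>V. \<Sum>u\<in>V. if u \<noteq> v then g u v else 0)" by (rule sum.swap)
  also have "\<dots> = (\<Sum>v\<in>V. \<Sum>u\<in>V - {v}. g u v)" unfolding off_diagonal ..
  finally show ?thesis .
qed

definition kappa :: "real" where
  "kappa = 1 - (1 - \<beta> * real \<Delta> / 2) / real (card V)"

lemma sum_contract_le:
  assumes V: "V \<noteq> {}" and d: "\<And>u. d u \<ge> 0"
  shows "(\<Sum>u\<in>V. contract d u) \<le> kappa * (\<Sum>u\<in>V. d u)"
proof -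
  have n: "real (card V) \<ge> 1" using card_V_ge_1[OF V] .
  have "(\<Sum>u\<in>V. \<Sum>v\<in>V - {u}. \<beta> * edge_mult u v / 2 * d v)
      = (\<Sum>v\<in>V. \<Sum>u\<in>V - {v}. \<beta> * edge_mult u v / 2 * d v)"
    by (rule sum_off_diagonal_swap)
  also have "\<dots> = (\<Sum>v\<in>V. \<beta> / 2 * d v * (\<Sum>u\<in>V - {v}. edge_mult u v))"
    by (intro sum.cong refl) (simp add: sum_distrib_left mult_ac)
  also have "\<dots> \<le> (\<Sum>v\<in>V. \<beta> / 2 * d v * real \<Delta>)"
    using sum_edge_mult_le beta_nonneg d by (intro sum_mono mult_left_mono) auto
  also have "\<dots> = \<beta> * real \<Delta> / 2 * (\<Sum>u\<in>V. d u)"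
    by (subst sum_distrib_left) (rule sum.cong, simp_all add: mult_ac)
  finally have off_diagonal: "(\<Sum>u\<in>V. \<Sum>v\<in>V - {u}. \<beta> * edge_mult u v / 2 * d v)
      \<le> \<beta> * real \<Delta> / 2 * (\<Sum>u\<in>V. d u)" .
  have "(\<Sum>u\<in>V. contract d u) = (1 - 1 / real (card V)) * (\<Sum>u\<in>V. d u)
      + 1 / real (card V) * (\<Sum>u\<in>V. \<Sum>v\<in>V - {u}. \<beta> * edge_mult u v / 2 * d v)"
    unfolding contract_def by (simp add: sum.distrib sum_distrib_left)
  also have "\<dots> \<le> (1 - 1 / real (card V)) * (\<Sum>u\<in>V. d u)
      + 1 / real (card V) * (\<beta> * real \<Delta> / 2 * (\<Sum>u\<in>V. d u))"
    using off_diagonal n by (intro add_left_mono mult_left_mono) auto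
  also have "\<dots> = kappa * (\<Sum>u\<in>V. d u)"
    unfolding kappa_def using n by (simp add: field_simps)
  finally show ?thesis .
qed

lemma contract_nonneg:
  assumes "V \<noteq> {}" "\<And>u. d u \<ge> 0"
  shows "contract d u \<ge> 0"
proof -
  have "1 - 1 / real (card V) \<ge> 0" using card_V_ge_1[OF assms(1)] by (simp add: field_simps)
  moreover have "(\<Sum>v\<in>V - {u}. \<beta> * edge_mult u v / 2 * d v) \<ge> 0"
    using beta_nonneg assms(2) by (intro sum_nonneg) (simp add: edge_mult_def)
  ultimately show ?thesis unfolding contract_def using assms(2)[of u] by simp
qed

lemma contract_iterate_nonneg:
  "V \<noteq> {} \<Longrightarrow> (\<And>u. d u \<ge> 0) \<Longrightarrow> (contract ^^ k) d u \<ge> 0"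
  by (induction k arbitrary: u) (simp_all add: contract_nonneg)

lemma kappa_nonneg:
  assumes "V \<noteq> {}"
  shows "kappa \<ge> 0"
proof -
  have "(1 - \<beta> * real \<Delta> / 2) / real (card V) \<le> 1 / real (card V)"
    using beta_nonneg card_V_ge_1[OF assms] by (intro divide_right_mono) auto
  also have "\<dots> \<le> 1" using card_V_ge_1[OF assms] by simp
  finally show ?thesis unfolding kappa_def by simp
qed

lemma site_lipschitz_glauber_iterate:
  assumes "site_lipschitz h d" "\<And>u. d u \<ge> 0" "V \<noteq> {}"
  shows "site_lipschitz ((glauber ^^ k) h) ((contract ^^ k) d)"
  by (induction k) (simp_all add: assms glauber_lipschitz contract_iterate_nonneg)

lemma sum_contract_iterate_le:
  assumes d: "\<And>u. d u \<ge> 0" and V: "V \<noteq> {}"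
  shows "(\<Sum>u\<in>V. (contract ^^ k) d u) \<le> kappa ^ k * (\<Sum>u\<in>V. d u)"
proof (induction k)
  case (Suc k)
  have "(\<Sum>u\<in>V. (contract ^^ Suc k) d u) \<le> kappa * (\<Sum>u\<in>V. (contract ^^ k) d u)"
    using sum_contract_le[OF V contract_iterate_nonneg[OF V d]] by simp
  also have "\<dots> \<le> kappa * (kappa ^ k * (\<Sum>u\<in>V. d u))"
    using Suc.IH kappa_nonneg[OF V] by (rule mult_left_mono)
  finally show ?case by simp
qed simp

subsection \<open>Poincar\'e inequality by contraction\<close>

lemma site_lipschitz_diff_le:
  assumes L: "site_lipschitz g d" and "finite U"
  shows "U \<subseteq> V \<Longrightarrow> \<sigma> \<in> \<Omega> \<Longrightarrow> \<sigma>' \<in> \<Omega> \<Longrightarrow> \<forall>x\<in>V - U. \<sigma> x = \<sigma>' x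
    \<Longrightarrow> \<bar>g \<sigma> - g \<sigma>'\<bar> \<le> (\<Sum>u\<in>U. d u)"
  using \<open>finite U\<close>
proof (induction U arbitrary: \<sigma> rule: finite_induct)
  case empty
  then have "\<sigma> = \<sigma>'"
    unfolding potts_configs_def by (auto intro!: extensionalityI[where A = V] simp: PiE_def)
  then show ?case by simp
next
  case (insert u U)
  then have u: "u \<in> V" by simp
  have c: "\<sigma>' u \<in> {1..q}" using colour_in_range[OF insert.prems(3) u] .
  have upd: "\<sigma>(u := \<sigma>' u) \<in> \<Omega>" using recolour_in_Omega[OF insert.prems(2) u c] .
  have "\<forall>x\<in>V - U. (\<sigma>(u := \<sigma>' u)) x = \<sigma>' x" using insert.prems(4) by auto
  then have "\<bar>g (\<sigma>(u := \<sigma>' u)) - g \<sigma>'\<bar> \<le> (\<Sum>u\<in>U. d u)"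
    using insert.prems(1) by (intro insert.IH[OF _ upd insert.prems(3)]) simp_all
  moreover have "\<bar>g \<sigma> - g (\<sigma>(u := \<sigma>' u))\<bar> \<le> d u"
    using L u insert.prems(2) c unfolding site_lipschitz_def by blast
  ultimately show ?case using insert.hyps by simp
qed

lemma abs_le_of_osc_le:
  assumes mean: "(\<Sum>\<tau>\<in>\<Omega>. weight \<tau> * g \<tau>) = 0"
    and osc: "\<forall>\<sigma>\<in>\<Omega>. \<forall>\<tau>\<in>\<Omega>. \<bar>g \<sigma> - g \<tau>\<bar> \<le> M" and \<sigma>: "\<sigma> \<in> \<Omega>"
  shows "\<bar>g \<sigma>\<bar> \<le> M"
proof -
  define W where "W = (\<Sum>\<tau>\<in>\<Omega>. weight \<tau>)"
  have W: "W > 0"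
    unfolding W_def using \<sigma> finite_Omega by (intro sum_pos2[of _ \<sigma>]) (auto simp: weight_pos less_imp_le)
  have "(\<Sum>\<tau>\<in>\<Omega>. weight \<tau> * (g \<sigma> - g \<tau>)) = W * g \<sigma> - (\<Sum>\<tau>\<in>\<Omega>. weight \<tau> * g \<tau>)"
    unfolding W_def by (simp add: right_diff_distrib sum_subtractf sum_distrib_right)
  then have "\<bar>g \<sigma>\<bar> * W = \<bar>\<Sum>\<tau>\<in>\<Omega>. weight \<tau> * (g \<sigma> - g \<tau>)\<bar>"
    using mean W by (simp add: abs_mult)
  also have "\<dots> \<le> (\<Sum>\<tau>\<in>\<Omega>. \<bar>weight \<tau> * (g \<sigma> - g \<tau>)\<bar>)" by (rule sum_abs)
  also have "\<dots> \<le> (\<Sum>\<tau>\<in>\<Omega>. weight \<tau> * M)"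
    using osc \<sigma> weight_pos by (intro sum_mono) (simp add: abs_mult mult_left_mono less_imp_le)
  also have "\<dots> = M * W" unfolding W_def by (simp add: sum_distrib_left mult.commute)
  finally show ?thesis using W by simp
qed

lemma ip_self_le_of_osc_le:
  assumes "(\<Sum>\<sigma>\<in>\<Omega>. weight \<sigma> * g \<sigma>) = 0" and "\<forall>\<sigma>\<in>\<Omega>. \<forall>\<tau>\<in>\<Omega>. \<bar>g \<sigma> - g \<tau>\<bar> \<le> M"
  shows "ip g g \<le> (\<Sum>\<sigma>\<in>\<Omega>. weight \<sigma>) * M\<^sup>2"
proof -
  have "ip g g \<le> (\<Sum>\<sigma>\<in>\<Omega>. weight \<sigma> * M\<^sup>2)"
    unfolding ip_def
  proof (rule sum_mono)
    fix \<sigma>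
    assume "\<sigma> \<in> \<Omega>"
    then have "\<bar>g \<sigma>\<bar>\<^sup>2 \<le> M\<^sup>2"
      using abs_le_of_osc_le[OF assms] by (intro power_mono) auto
    then show "weight \<sigma> * g \<sigma> * g \<sigma> \<le> weight \<sigma> * M\<^sup>2"
      using weight_pos[of \<sigma>] by (simp add: mult.assoc power2_eq_square)
  qed
  then show ?thesis by (simp add: sum_distrib_right)
qed

lemma ip_self_nonneg: "ip f f \<ge> 0"
  unfolding ip_def by (intro sum_nonneg) (simp add: weight_pos less_imp_le mult.assoc)

lemma ip_Cauchy_Schwarz: "(ip f g)\<^sup>2 \<le> ip f f * ip g g"
  using weighted_Cauchy_Schwarz[of \<Omega> weight f g] weight_pos
  unfolding ip_def by (simp add: power2_eq_square less_imp_le mult.assoc)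

lemma sum_weight_glauber_iterate:
  "V \<noteq> {} \<Longrightarrow> (\<Sum>\<sigma>\<in>\<Omega>. weight \<sigma> * (glauber ^^ k) g \<sigma>) = (\<Sum>\<sigma>\<in>\<Omega>. weight \<sigma> * g \<sigma>)"
  by (induction k) (simp_all add: sum_weight_glauber)

lemma site_lipschitz_bounded: "site_lipschitz g (\<lambda>_. 2 * (\<Sum>\<sigma>\<in>\<Omega>. \<bar>g \<sigma>\<bar>))"
proof -
  have abs_le: "\<bar>g \<sigma>\<bar> \<le> (\<Sum>\<sigma>\<in>\<Omega>. \<bar>g \<sigma>\<bar>)" if "\<sigma> \<in> \<Omega>" for \<sigma>
    using member_le_sum[OF that _ finite_Omega, of "\<lambda>\<sigma>. \<bar>g \<sigma>\<bar>"] by simp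
  show ?thesis
    unfolding site_lipschitz_def
  proof (intro ballI)
    fix u \<sigma> c
    assume "u \<in> V" "\<sigma> \<in> \<Omega>" "c \<in> {1..q}"
    then show "\<bar>g \<sigma> - g (\<sigma>(u := c))\<bar> \<le> 2 * (\<Sum>\<sigma>\<in>\<Omega>. \<bar>g \<sigma>\<bar>)"
      using abs_le[of \<sigma>] abs_le[of "\<sigma>(u := c)"] recolour_in_Omega by fastforce
  qed
qed

lemma ip_glauber_iterate_le:
  assumes L: "site_lipschitz g d" and d: "\<And>u. d u \<ge> 0" and V: "V \<noteq> {}"
    and mean: "(\<Sum>\<sigma>\<in>\<Omega>. weight \<sigma> * g \<sigma>) = 0"
  shows "ip ((glauber ^^ k) g) ((glauber ^^ k) g) \<le> (\<Sum>\<sigma>\<in>\<Omega>. weight \<sigma>) * (\<Sum>u\<in>V. d u)\<^sup>2 * (kappa\<^sup>2) ^ k"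
proof -
  have "\<bar>(glauber ^^ k) g \<sigma> - (glauber ^^ k) g \<tau>\<bar> \<le> kappa ^ k * (\<Sum>u\<in>V. d u)"
    if "\<sigma> \<in> \<Omega>" "\<tau> \<in> \<Omega>" for \<sigma> \<tau>
  proof -
    have "\<bar>(glauber ^^ k) g \<sigma> - (glauber ^^ k) g \<tau>\<bar> \<le> (\<Sum>u\<in>V. (contract ^^ k) d u)"
      using site_lipschitz_diff_le[OF site_lipschitz_glauber_iterate[OF L d V] finite_V order_refl that]
      by simp
    also have "\<dots> \<le> kappa ^ k * (\<Sum>u\<in>V. d u)" by (rule sum_contract_iterate_le[OF d V])
    finally show ?thesis .
  qed
  then have "ip ((glauber ^^ k) g) ((glauber ^^ k) g) \<le> (\<Sum>\<sigma>\<in>\<Omega>. weight \<sigma>) * (kappa ^ k * (\<Sum>u\<in>V. d u))\<^sup>2"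
    using sum_weight_glauber_iterate[OF V] mean by (intro ip_self_le_of_osc_le) auto
  moreover have "(kappa ^ k * (\<Sum>u\<in>V. d u))\<^sup>2 = (kappa\<^sup>2) ^ k * (\<Sum>u\<in>V. d u)\<^sup>2"
    by (simp add: power_mult_distrib power_mult[symmetric] mult.commute)
  ultimately show ?thesis by (simp add: mult_ac)
qed

text \<open>As \<open>glauber\<close> is self-adjoint, \<open>b k = ip (glauber\<^sup>k g) (glauber\<^sup>k g)\<close> is log-convex,
  and \<open>b k = O(kappa\<^sup>2\<^sup>k)\<close> by the contraction of the Lipschitz constants; hence
  \<open>b 1 \<le> kappa\<^sup>2 b 0\<close>.\<close>

lemma glauber_poincare:
  assumes V: "V \<noteq> {}" and mean: "(\<Sum>\<sigma>\<in>\<Omega>. weight \<sigma> * g \<sigma>) = 0"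
  shows "(1 - kappa) * ip g g \<le> ip g g - ip g (glauber g)"
proof -
  define b where "b k = ip ((glauber ^^ k) g) ((glauber ^^ k) g)" for k
  have b_nonneg: "\<And>k. b k \<ge> 0" unfolding b_def by (rule ip_self_nonneg)
  have log_convex: "(b (Suc k))\<^sup>2 \<le> b k * b (Suc (Suc k))" for k
  proof -
    have "b (Suc k) = ip ((glauber ^^ k) g) ((glauber ^^ Suc (Suc k)) g)"
      unfolding b_def using glauber_self_adjoint[of "glauber ((glauber ^^ k) g)" "(glauber ^^ k) g"] by simp
    then show ?thesis unfolding b_def using ip_Cauchy_Schwarz by simp
  qed
  have bound: "b k \<le> (\<Sum>\<sigma>\<in>\<Omega>. weight \<sigma>) * (\<Sum>u\<in>V. 2 * (\<Sum>\<sigma>\<in>\<Omega>. \<bar>g \<sigma>\<bar>))\<^sup>2 * (kappa\<^sup>2) ^ k"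
    for k
    unfolding b_def by (rule ip_glauber_iterate_le[OF site_lipschitz_bounded _ V mean]) (simp add: sum_nonneg)
  have "b 1 \<le> kappa\<^sup>2 * b 0"
    by (rule log_convex_ratio_le[of b, OF b_nonneg log_convex bound]) simp
  then have "b 0 * b 1 \<le> (kappa * b 0)\<^sup>2"
    using mult_left_mono[of _ _ "b 0"] b_nonneg by (fastforce simp: power2_eq_square mult_ac)
  then have "(ip g (glauber g))\<^sup>2 \<le> (kappa * b 0)\<^sup>2"
    using ip_Cauchy_Schwarz[of g "glauber g"] unfolding b_def by simp
  then have "ip g (glauber g) \<le> kappa * b 0"
    by (rule power2_le_imp_le) (use kappa_nonneg[OF V] b_nonneg in simp)
  then show ?thesis unfolding b_def by (simp add: algebra_simps)
qed

text \<open>The factor \<open>exp (- 2 \<beta> \<Delta>)\<close> collects the loss \<open>exp (- \<beta> \<Delta>)\<close> in comparing the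
  Swendsen--Wang Dirichlet form with the local variations and the same loss in comparing
  these with the Glauber Dirichlet form.\<close>

lemma dirichlet_ge:
  assumes V: "V \<noteq> {}" and mean: "(\<Sum>\<sigma>\<in>\<Omega>. weight \<sigma> * g \<sigma>) = 0"
  shows "exp (- 2 * \<beta> * real \<Delta>) * (1 - \<beta> * real \<Delta> / 2) / real (card V) * ip g g \<le> dirichlet g"
proof -
  define e where "e = exp (\<beta> * real \<Delta>)"
  define n where "n = real (card V)"
  have e: "e > 0" unfolding e_def by simp
  have n: "n \<ge> 1" unfolding n_def using card_V_ge_1[OF V] .
  have q: "real q > 0" using q_pos by simp
  have "local_var v g \<le> 2 * real q * e * dirichlet g" if "v \<in> V" for v
    using dirichlet_ge_local_var[OF that, of g] q e
    unfolding e_def by (simp add: exp_minus field_simps)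
  then have "(\<Sum>v\<in>V. local_var v g) \<le> (\<Sum>v\<in>V. 2 * real q * e * dirichlet g)"
    by (rule sum_mono)
  then have local: "(\<Sum>v\<in>V. local_var v g) \<le> n * (2 * real q * e * dirichlet g)"
    unfolding n_def by simp
  have "(1 - \<beta> * real \<Delta> / 2) * ip g g = (1 - kappa) * ip g g * n"
    unfolding kappa_def n_def[symmetric] using n by (simp add: field_simps)
  also have "\<dots> \<le> (ip g g - ip g (glauber g)) * n"
    using glauber_poincare[OF V mean] n by (intro mult_right_mono) auto
  also have "\<dots> \<le> e / (2 * real q) * (\<Sum>v\<in>V. local_var v g)"
    using glauber_deficit_le[OF V, of g] unfolding e_def n_def by (simp add: mult.commute)
  also have "\<dots> \<le> e / (2 * real q) * (n * (2 * real q * e * dirichlet g))"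
    using local e q by (intro mult_left_mono) auto
  also have "\<dots> = n * e\<^sup>2 * dirichlet g"
    using q by (simp add: power2_eq_square field_simps)
  finally have "(1 - \<beta> * real \<Delta> / 2) * ip g g / (n * e\<^sup>2) \<le> dirichlet g"
    using n e by (simp add: pos_divide_le_eq mult_ac)
  moreover have "exp (- 2 * \<beta> * real \<Delta>) * (1 - \<beta> * real \<Delta> / 2) / n * ip g g
      = (1 - \<beta> * real \<Delta> / 2) * ip g g / (n * e\<^sup>2)"
    unfolding e_def by (simp add: power2_eq_square exp_add[symmetric] exp_minus field_simps)
  ultimately show ?thesis unfolding n_def by simp
qed

subsection \<open>Spectrum of the Swendsen--Wang chain\<close>

definition P_apply :: "(('v \<Rightarrow> nat) \<Rightarrow> real) \<Rightarrow> ('v \<Rightarrow> nat) \<Rightarrow> real" where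
  "P_apply h x = (\<Sum>y\<in>\<Omega>. P x y * h y)"

lemma weight_mult_P_apply: "weight x * P_apply h x = (\<Sum>y\<in>\<Omega>. flow x y * h y)"
  unfolding P_apply_def P_SW_eq sum_distrib_left using weight_pos[of x] by (intro sum.cong) simp_all

lemma ip_P_apply: "ip h1 (P_apply h2) = (\<Sum>x\<in>\<Omega>. \<Sum>y\<in>\<Omega>. flow x y * h1 x * h2 y)"
proof -
  have "ip h1 (P_apply h2) = (\<Sum>x\<in>\<Omega>. h1 x * (weight x * P_apply h2 x))"
    unfolding ip_def by (simp add: mult_ac)
  then show ?thesis unfolding weight_mult_P_apply by (simp add: sum_distrib_left mult_ac)
qed

lemma P_apply_self_adjoint: "ip h1 (P_apply h2) = ip h2 (P_apply h1)"
  unfolding ip_P_apply by (subst sum.swap) (simp add: flow_sym mult_ac)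

lemma P_apply_const: "P_apply (\<lambda>_. 1) x = 1"
  using weight_mult_P_apply[of x "\<lambda>_. 1"] sum_flow[of x] weight_pos[of x] by simp

lemma dirichlet_eq_ip: "dirichlet g = ip g g - ip g (P_apply g)"
  unfolding dirichlet_def ip_P_apply unfolding ip_def by (simp add: power2_eq_square mult.assoc)

lemma ip_P_apply_self_nonneg: "ip g (P_apply g) \<ge> 0"
  unfolding ip_P_apply flow_quadratic_form using odds_nonneg q_comp_pos
  by (intro sum_nonneg) (simp add: mult.assoc less_imp_le)

lemma ip_self_pos: "\<exists>x\<in>\<Omega>. f x \<noteq> 0 \<Longrightarrow> ip f f > 0"
  unfolding ip_def using weight_pos finite_Omega
  by (elim bexE, intro sum_pos2)
    (auto simp: mult.assoc zero_less_mult_iff zero_le_mult_iff less_imp_le[OF weight_pos])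

lemma eigenvalue_P_SW_real:
  assumes "is_eigenvalue \<Omega> P \<xi>"
  shows "Im \<xi> = 0 \<and> (\<exists>g. (\<exists>x\<in>\<Omega>. g x \<noteq> 0) \<and> (\<forall>x\<in>\<Omega>. P_apply g x = Re \<xi> * g x))"
proof -
  obtain f where f: "\<exists>x\<in>\<Omega>. f x \<noteq> 0"
    and eig: "\<forall>x\<in>\<Omega>. (\<Sum>y\<in>\<Omega>. complex_of_real (P x y) * f y) = \<xi> * f x"
    using assms unfolding is_eigenvalue_def by blast
  define a where "a x = Re (f x)" for x
  define b where "b x = Im (f x)" for x
  have Pa: "P_apply a x = Re \<xi> * a x - Im \<xi> * b x" and Pb: "P_apply b x = Im \<xi> * a x + Re \<xi> * b x"
    if "x \<in> \<Omega>" for x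
    using arg_cong[OF bspec[OF eig that], of Re] arg_cong[OF bspec[OF eig that], of Im]
    unfolding P_apply_def a_def b_def by (simp_all add: Re_sum Im_sum)
  have "ip b (P_apply a) = (\<Sum>x\<in>\<Omega>. Re \<xi> * (weight x * a x * b x) - Im \<xi> * (weight x * b x * b x))"
    unfolding ip_def by (intro sum.cong refl) (simp add: Pa algebra_simps)
  also have "\<dots> = Re \<xi> * ip a b - Im \<xi> * ip b b"
    unfolding ip_def by (simp add: sum_subtractf sum_distrib_left)
  finally have "ip b (P_apply a) = Re \<xi> * ip a b - Im \<xi> * ip b b" .
  moreover have "ip a (P_apply b) = (\<Sum>x\<in>\<Omega>. Im \<xi> * (weight x * a x * a x) + Re \<xi> * (weight x * a x * b x))"
    unfolding ip_def by (intro sum.cong refl) (simp add: Pb algebra_simps)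
  then have "ip a (P_apply b) = Im \<xi> * ip a a + Re \<xi> * ip a b"
    unfolding ip_def by (simp add: sum.distrib sum_distrib_left)
  moreover obtain x where x: "x \<in> \<Omega>" "a x \<noteq> 0 \<or> b x \<noteq> 0"
    using f unfolding a_def b_def by (metis complex_eqI zero_complex.sel)
  ultimately have "Im \<xi> * (ip a a + ip b b) = 0"
    using P_apply_self_adjoint[of b a] by (simp add: algebra_simps)
  moreover have "ip a a + ip b b > 0"
    using x ip_self_pos ip_self_nonneg by (meson add_pos_nonneg add_nonneg_pos)
  ultimately have Im: "Im \<xi> = 0" by simp
  then show ?thesis using Pa Pb x by auto
qed

lemma real_eigenvalue_P_SW_bounds:
  assumes ne: "\<exists>x\<in>\<Omega>. g x \<noteq> 0" and eig: "\<forall>x\<in>\<Omega>. P_apply g x = \<xi> * g x" and "\<xi> \<noteq> 1"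
  shows "0 \<le> \<xi>" "\<xi> \<le> 1"
    "V \<noteq> {} \<Longrightarrow> exp (- 2 * \<beta> * real \<Delta>) * (1 - \<beta> * real \<Delta> / 2) / real (card V) \<le> 1 - \<xi>"
proof -
  have ip_P: "ip h (P_apply g) = \<xi> * ip h g" for h
    unfolding ip_def using eig by (simp add: sum_distrib_left mult_ac cong: sum.cong)
  have pos: "ip g g > 0" using ip_self_pos[OF ne] .
  show "0 \<le> \<xi>" using ip_P_apply_self_nonneg[of g] pos by (simp add: ip_P zero_le_mult_iff)
  have D: "dirichlet g = (1 - \<xi>) * ip g g" unfolding dirichlet_eq_ip ip_P by (simp add: algebra_simps)
  show "\<xi> \<le> 1" using dirichlet_nonneg[of g] pos by (simp add: D zero_le_mult_iff)
  have "\<xi> * ip (\<lambda>_. 1) g = ip (\<lambda>_. 1) g"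
    using ip_P[of "\<lambda>_. 1"] P_apply_self_adjoint[of "\<lambda>_. 1" g]
    unfolding ip_def P_apply_const by (simp add: mult.commute)
  then have "(\<Sum>\<sigma>\<in>\<Omega>. weight \<sigma> * g \<sigma>) = 0" using \<open>\<xi> \<noteq> 1\<close> unfolding ip_def by simp
  moreover assume "V \<noteq> {}"
  ultimately show "exp (- 2 * \<beta> * real \<Delta>) * (1 - \<beta> * real \<Delta> / 2) / real (card V) \<le> 1 - \<xi>"
    using mult_right_le_imp_le[OF dirichlet_ge[of g, unfolded D] pos] by simp
qed

theorem spectral_gap_P_SW_ge:
  assumes "V \<noteq> {}"
  shows "spectral_gap \<Omega> P \<ge> max 0 (exp (- 2 * \<beta> * real \<Delta>) * (1 - \<beta> * real \<Delta> / 2) / real (card V))"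
proof (rule spectral_gap_geI[OF finite_Omega])
  have "exp (- 2 * \<beta> * real \<Delta>) * (1 - \<beta> * real \<Delta> / 2) \<le> exp (- 2 * \<beta> * real \<Delta>) * 1"
    using beta_nonneg by (intro mult_left_mono) auto
  also have "\<dots> \<le> 1" using beta_nonneg by simp
  finally show "max 0 (exp (- 2 * \<beta> * real \<Delta>) * (1 - \<beta> * real \<Delta> / 2) / real (card V)) \<le> 1"
    using card_V_ge_1[OF assms] by (simp add: divide_le_eq_1 order.trans)
next
  fix \<xi>
  assume "is_eigenvalue \<Omega> P \<xi>" "\<xi> \<noteq> 1"
  then obtain g where "Im \<xi> = 0" "\<exists>x\<in>\<Omega>. g x \<noteq> 0" "\<forall>x\<in>\<Omega>. P_apply g x = Re \<xi> * g x"
    using eigenvalue_P_SW_real by blast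
  moreover from this have "Re \<xi> \<noteq> 1" using \<open>\<xi> \<noteq> 1\<close> complex_eqI by force
  ultimately show "cmod \<xi> \<le> 1 - max 0 (exp (- 2 * \<beta> * real \<Delta>) * (1 - \<beta> * real \<Delta> / 2) / real (card V))"
    using real_eigenvalue_P_SW_bounds[of g "Re \<xi>"] assms by (simp add: cmod_eq_Re)
qed

end

lemma eigenvalue_P_SW_degenerate:
  assumes "multigraph V E ends" "V = {} \<or> q = 0" "is_eigenvalue (potts_configs V q) (P_SW V E ends q \<beta>) \<xi>"
  shows "\<xi> = 1"
proof (cases "V = {}")
  case True
  then have "E = {}" using assms(1) unfolding multigraph_def by auto
  moreover have "potts_configs V q = {\<lambda>_. undefined}" unfolding potts_configs_def True by simp
  ultimately show ?thesis
    using assms(3) True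
    unfolding is_eigenvalue_def P_SW_def mono_edges_def num_comp_def by auto
next
  case False
  then have "potts_configs V q = {}"
    using assms(2) unfolding potts_configs_def by (auto simp: PiE_eq_empty_iff)
  then show ?thesis using assms(3) unfolding is_eigenvalue_def by simp
qed

lemma c_SW_le_gap_bound:
  fixes D q :: nat and \<beta> \<epsilon> n :: real
  assumes "q \<ge> 1" "\<beta> \<ge> 0" "\<beta> * real D \<le> 2 * \<epsilon>" "n > 0"
  shows "1 / (real q * (real q * exp (2 * \<beta>)) ^ (2 * D)) * (1 - \<epsilon>) / n
         \<le> max 0 (exp (- 2 * \<beta> * real D) * (1 - \<beta> * real D / 2) / n)"
proof -
  let ?c = "1 / (real q * (real q * exp (2 * \<beta>)) ^ (2 * D))"
  have "exp (2 * \<beta> * real D) \<le> exp (2 * \<beta>) ^ (2 * D)"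
    using assms(2) by (simp add: exp_of_nat_mult[symmetric] mult_ac)
  also have "\<dots> \<le> real q * (real q * exp (2 * \<beta>)) ^ (2 * D)"
    using assms(1) by (intro order.trans[OF power_mono[of "exp (2 * \<beta>)"] mult_le_cancel_right1[THEN iffD2]])
      (auto simp: mult_le_cancel_right1)
  finally have c: "?c \<le> exp (- 2 * \<beta> * real D)" "?c \<ge> 0"
    using assms by (simp_all add: exp_minus field_simps)
  have "?c * (1 - \<epsilon>) \<le> max 0 (exp (- 2 * \<beta> * real D) * (1 - \<beta> * real D / 2))"
  proof (cases "\<epsilon> \<le> 1")
    case True
    then have "?c * (1 - \<epsilon>) \<le> exp (- 2 * \<beta> * real D) * (1 - \<beta> * real D / 2)"
      using c assms(3) by (intro mult_mono) auto
    then show ?thesis by simp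
  next
    case False
    then have "?c * (1 - \<epsilon>) \<le> 0" using c by (intro mult_nonneg_nonpos) auto
    then show ?thesis by simp
  qed
  then have "?c * (1 - \<epsilon>) / n \<le> max 0 (exp (- 2 * \<beta> * real D) * (1 - \<beta> * real D / 2)) / n"
    using assms(4) by (intro divide_right_mono) auto
  also have "\<dots> = max 0 (exp (- 2 * \<beta> * real D) * (1 - \<beta> * real D / 2) / n)"
    using assms(4) by (auto simp: max_def zero_le_divide_iff)
  finally show ?thesis .
qed

theorem corollary3p3:
  fixes V :: "'v set" and E :: "'e set" and ends :: "'e \<Rightarrow> 'v \<times> 'v"
    and q :: nat and \<beta> \<epsilon> :: real
  assumes "multigraph V E ends"
    and "\<beta> \<ge> 0" and "\<epsilon> > 0"
    and "\<beta> * real (max_deg V E ends) \<le> 2 * \<epsilon>"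
  shows "spectral_gap (potts_configs V q) (P_SW V E ends q \<beta>)
         \<ge> (1 / (real q * (real q * exp (2 * \<beta>)) ^ (2 * max_deg V E ends)))
             * (1 - \<epsilon>) / real (card V)"
proof (cases "V = {} \<or> q = 0")
  case True
  have "finite (potts_configs V q)"
    using assms(1) unfolding multigraph_def potts_configs_def by (simp add: finite_PiE)
  then have "spectral_gap (potts_configs V q) (P_SW V E ends q \<beta>) \<ge> 0"
    using eigenvalue_P_SW_degenerate[OF assms(1) True] by (intro spectral_gap_geI) auto
  then show ?thesis using True by auto
next
  case False
  then interpret swendsen_wang V E ends q \<beta> using assms by unfold_locales auto
  have "real (card V) > 0" using card_V_ge_1 False by fastforce
  then show ?thesis
    using c_SW_le_gap_bound[OF q_pos beta_nonneg assms(4)] spectral_gap_P_SW_ge False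
    by (meson order.trans)
qed

end
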